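(* For any $V,W\in\mathcal{P}$, $\nu,p\in\mathbb{C}$ and $\alpha>0$, the integrals $$I_1=\int_{\mathcal{P}}|Y|^\nu\,\mathrm{tr}(Y^p)\,\mathrm{etr}(-VY^\alpha-WY^{-\alpha})\,\mu(dY)\quad\text{and}\quad I_2=\int_{\mathcal{P}}|Y|^\nu\,\ln|Y|\,\mathrm{etr}(-VY^\alpha-WY^{-\alpha})\,\mu(dY)$$ are convergent.
   Context: $\mathcal{P}$ is the space of positive definite $n\times n$ real symmetric matrices; $|Y|=\det Y$, $\mathrm{etr}(X)=\exp(\mathrm{tr}X)$; powers of $Y$ are defined by functional calculus; $\mu(dY)=|Y|^{-(n+1)/2}\prod_{1\le i\le j\le n}dy_{ij}$. *)

theory Defs
  imports "HOL-Analysis.Analysis" "HOL-Combinatorics.Permutations"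
begin

text \<open>n x n matrices are represented as functions nat => nat => 'a, only entries
  with indices below n being relevant.\<close>

definition mmul :: "nat \<Rightarrow> (nat \<Rightarrow> nat \<Rightarrow> 'a::semiring_0) \<Rightarrow> (nat \<Rightarrow> nat \<Rightarrow> 'a) \<Rightarrow> nat \<Rightarrow> nat \<Rightarrow> 'a" where
  "mmul n A B = (\<lambda>i j. \<Sum>k<n. A i k * B k j)"

definition mtrace :: "nat \<Rightarrow> (nat \<Rightarrow> nat \<Rightarrow> 'a::comm_monoid_add) \<Rightarrow> 'a" where
  "mtrace n A = (\<Sum>i<n. A i i)"

definition mdet :: "nat \<Rightarrow> (nat \<Rightarrow> nat \<Rightarrow> 'a::comm_ring_1) \<Rightarrow> 'a" where
  "mdet n A = (\<Sum>p | p permutes {..<n}. of_int (sign p) * (\<Prod>i<n. A i (p i)))"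

definition posdef :: "nat \<Rightarrow> (nat \<Rightarrow> nat \<Rightarrow> real) \<Rightarrow> bool" where
  "posdef n Y \<longleftrightarrow> (\<forall>i<n. \<forall>j<n. Y i j = Y j i) \<and>
     (\<forall>x::nat \<Rightarrow> real. (\<exists>i<n. x i \<noteq> 0) \<longrightarrow> 0 < (\<Sum>i<n. \<Sum>j<n. x i * Y i j * x j))"

definition spec_decomp :: "nat \<Rightarrow> (nat \<Rightarrow> nat \<Rightarrow> real) \<Rightarrow> (nat \<Rightarrow> nat \<Rightarrow> real) \<Rightarrow> (nat \<Rightarrow> real) \<Rightarrow> bool" where
  "spec_decomp n Y Q l \<longleftrightarrow>
     (\<forall>i<n. \<forall>j<n. (\<Sum>k<n. Q k i * Q k j) = (if i = j then 1 else 0)) \<and>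
     (\<forall>i<n. \<forall>j<n. Y i j = (\<Sum>k<n. Q i k * l k * Q j k))"

definition mfun :: "nat \<Rightarrow> (real \<Rightarrow> 'a::real_algebra_1) \<Rightarrow> (nat \<Rightarrow> nat \<Rightarrow> real) \<Rightarrow> nat \<Rightarrow> nat \<Rightarrow> 'a" where
  "mfun n f Y = (let (Q, l) = (SOME (Q, l). spec_decomp n Y Q l) in
      (\<lambda>i j. \<Sum>k<n. of_real (Q i k) * f (l k) * of_real (Q j k)))"

definition mpow_real :: "nat \<Rightarrow> (nat \<Rightarrow> nat \<Rightarrow> real) \<Rightarrow> real \<Rightarrow> nat \<Rightarrow> nat \<Rightarrow> real" where
  "mpow_real n Y a = mfun n (\<lambda>t. t powr a) Y"

definition mpow_cplx :: "nat \<Rightarrow> (nat \<Rightarrow> nat \<Rightarrow> real) \<Rightarrow> complex \<Rightarrow> nat \<Rightarrow> nat \<Rightarrow> complex" where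
  "mpow_cplx n Y p = mfun n (\<lambda>t. complex_of_real t powr p) Y"

text \<open>Coordinates y_ij, i <= j < n, of a symmetric matrix.\<close>
definition upper :: "nat \<Rightarrow> (nat \<times> nat) set" where
  "upper n = {(i, j). i \<le> j \<and> j < n}"

definition symm_of :: "nat \<Rightarrow> (nat \<times> nat \<Rightarrow> real) \<Rightarrow> nat \<Rightarrow> nat \<Rightarrow> real" where
  "symm_of n y = (\<lambda>i j. y (min i j, max i j))"

definition Pset :: "nat \<Rightarrow> (nat \<times> nat \<Rightarrow> real) set" where
  "Pset n = {y. posdef n (symm_of n y)}"

definition mu :: "nat \<Rightarrow> (nat \<times> nat \<Rightarrow> real) measure" where
  "mu n = density (PiM (upper n) (\<lambda>_. lborel))
     (\<lambda>y. indicator (Pset n) y * ennreal (mdet n (symm_of n y) powr (- (real n + 1) / 2)))"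

definition etr :: "nat \<Rightarrow> (nat \<Rightarrow> nat \<Rightarrow> real) \<Rightarrow> real" where
  "etr n X = exp (mtrace n X)"

end

(* Diagonalise Y = Q diag(l) Q^T with Q orthogonal; the spectral theorem is proved variationally,
   an eigenvector being a maximiser of the Rayleigh quotient on the unit sphere of the orthogonal
   complement of the eigenvectors found so far.  Then |Y| = prod l_k, |tr Y^p| and |ln |Y|| are
   bounded by sums of powers l_k^b + l_k^-b, and if v, w > 0 bound V, W from below,
   tr(V Y^a) >= v sum_k l_k^a, so etr(-V Y^alpha - W Y^-alpha) <= prod_k exp(-v l_k^alpha - w l_k^-alpha).
   Each eigenvalue factor t^a (1 + t^b + t^-b) exp(-v t^alpha - w t^-alpha) is at most
   K exp(-v/2 t^alpha), the exponential decay at 0 absorbing negative powers.  Finally every entry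
   satisfies |y_ij| <= max_k l_k, so the integrand with its density is dominated by
   K^n prod_{i<=j} exp(-c |y_ij|^alpha), which is Lebesgue integrable in the coordinates.
   Measurability of Y |-> f(Y) holds for all f that are continuous away from 0 and vanish at 0:
   the class of such f is closed under sums, products and pointwise limits and contains the
   polynomials, hence by Weierstrass all continuous functions. *)

theory Submission
  imports Defs "HOL-Probability.Probability" "HOL-Complex_Analysis.Cauchy_Integral_Theorem"
    "Jordan_Normal_Form.Determinant"
begin

section \<open>The spectral theorem\<close>

definition vdot :: "nat \<Rightarrow> (nat \<Rightarrow> real) \<Rightarrow> (nat \<Rightarrow> real) \<Rightarrow> real" where
  "vdot n x y = (\<Sum>i<n. x i * y i)"

definition mvmul :: "nat \<Rightarrow> (nat \<Rightarrow> nat \<Rightarrow> real) \<Rightarrow> (nat \<Rightarrow> real) \<Rightarrow> nat \<Rightarrow> real" where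
  "mvmul n Y x i = (\<Sum>j<n. Y i j * x j)"

definition bilin :: "nat \<Rightarrow> (nat \<Rightarrow> nat \<Rightarrow> real) \<Rightarrow> (nat \<Rightarrow> real) \<Rightarrow> (nat \<Rightarrow> real) \<Rightarrow> real" where
  "bilin n Y x y = (\<Sum>i<n. \<Sum>j<n. x i * Y i j * y j)"

definition msym :: "nat \<Rightarrow> (nat \<Rightarrow> nat \<Rightarrow> real) \<Rightarrow> bool" where
  "msym n Y \<longleftrightarrow> (\<forall>i<n. \<forall>j<n. Y i j = Y j i)"

definition orthonormal :: "nat \<Rightarrow> nat \<Rightarrow> (nat \<Rightarrow> nat \<Rightarrow> real) \<Rightarrow> bool" where
  "orthonormal n m q \<longleftrightarrow> (\<forall>a<m. \<forall>b<m. vdot n (q a) (q b) = (if a = b then 1 else 0))"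

definition perp_space :: "nat \<Rightarrow> nat \<Rightarrow> (nat \<Rightarrow> nat \<Rightarrow> real) \<Rightarrow> (nat \<Rightarrow> real) set" where
  "perp_space n m q = {x. (\<forall>i\<ge>n. x i = 0) \<and> (\<forall>k<m. vdot n x (q k) = 0)}"

lemma vdot_commute: "vdot n x y = vdot n y x"
  unfolding vdot_def by (simp add: mult.commute)

lemma vdot_self_nonneg: "0 \<le> vdot n x x"
  unfolding vdot_def by (intro sum_nonneg) auto

lemma vdot_self_eq_0D: "vdot n x x = 0 \<Longrightarrow> i < n \<Longrightarrow> x i = 0"
  unfolding vdot_def by (subst (asm) sum_nonneg_eq_0_iff) auto

lemma vdot_cong:
  "(\<And>i. i < n \<Longrightarrow> x i = x' i) \<Longrightarrow> (\<And>i. i < n \<Longrightarrow> y i = y' i) \<Longrightarrow> vdot n x y = vdot n x' y'"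
  unfolding vdot_def by (intro sum.cong) auto

lemma vdot_lincomb_left: "vdot n (\<lambda>i. a * x i + b * y i) z = a * vdot n x z + b * vdot n y z"
  unfolding vdot_def by (simp add: algebra_simps sum.distrib sum_distrib_left)

lemma vdot_lincomb_right: "vdot n z (\<lambda>i. a * x i + b * y i) = a * vdot n z x + b * vdot n z y"
  using vdot_lincomb_left by (simp add: vdot_commute)

lemma vdot_add_scaled_left: "vdot n (\<lambda>i. x i + t * h i) z = vdot n x z + t * vdot n h z"
  unfolding vdot_def by (simp add: algebra_simps sum.distrib sum_distrib_left)

lemma vdot_scale_left: "vdot n (\<lambda>i. a * x i) z = a * vdot n x z"
  unfolding vdot_def by (simp add: algebra_simps sum_distrib_left)

lemma vdot_scale_right: "vdot n z (\<lambda>i. a * x i) = a * vdot n z x"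
  using vdot_scale_left by (simp add: vdot_commute)

lemma vdot_sum_left: "vdot n (\<lambda>i. \<Sum>k\<in>K. c k * x k i) z = (\<Sum>k\<in>K. c k * vdot n (x k) z)"
  unfolding vdot_def by (simp add: sum_distrib_left sum_distrib_right sum.swap[of _ K] mult.assoc)

lemma vdot_unit_left: "i < n \<Longrightarrow> vdot n (\<lambda>j. if i = j then 1 else 0) v = v i"
  unfolding vdot_def by (simp add: if_distrib[of "\<lambda>a. a * _"] cong: if_cong)

lemma vdot_add_scaled_self:
  "vdot n (\<lambda>i. x i + t * h i) (\<lambda>i. x i + t * h i) = vdot n x x + 2 * t * vdot n x h + t\<^sup>2 * vdot n h h"
  unfolding vdot_def by (simp add: algebra_simps sum.distrib sum_distrib_left power2_eq_square)

lemma bilin_eq_vdot_mvmul: "bilin n Y x y = vdot n x (mvmul n Y y)"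
  unfolding bilin_def vdot_def mvmul_def by (simp add: sum_distrib_left mult.assoc)

lemma bilin_commute: "msym n Y \<Longrightarrow> bilin n Y x y = bilin n Y y x"
  unfolding bilin_def msym_def
  by (subst sum.swap) (intro sum.cong refl, auto simp: mult.commute mult.left_commute)

lemma vdot_mvmul_commute: "msym n Y \<Longrightarrow> vdot n (mvmul n Y x) y = vdot n x (mvmul n Y y)"
  using bilin_commute[of n Y y x] by (simp add: bilin_eq_vdot_mvmul vdot_commute)

lemma bilin_add_scaled_self:
  "bilin n Y (\<lambda>i. x i + t * h i) (\<lambda>i. x i + t * h i)
     = bilin n Y x x + t * bilin n Y h x + t * bilin n Y x h + t\<^sup>2 * bilin n Y h h"
  unfolding bilin_def by (simp add: algebra_simps sum.distrib sum_distrib_left power2_eq_square)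

lemma bilin_scale_self: "bilin n Y (\<lambda>i. c * x i) (\<lambda>i. c * x i) = c * c * bilin n Y x x"
  unfolding bilin_def by (simp add: sum_distrib_left algebra_simps)

lemma normalize_vector:
  assumes "0 < vdot n z z"
  obtains c where "0 < c" "vdot n (\<lambda>i. c * z i) (\<lambda>i. c * z i) = 1"
proof
  define c where "c = 1 / sqrt (vdot n z z)"
  show "0 < c" using assms by (simp add: c_def)
  have "c * c * vdot n z z = 1" using assms by (simp add: c_def)
  then show "vdot n (\<lambda>i. c * z i) (\<lambda>i. c * z i) = 1"
    by (simp only: vdot_scale_left vdot_scale_right mult.assoc)
qed

lemma orthonormal_sum_squares:
  assumes "orthonormal n m q"
  shows "(\<Sum>i<n. \<Sum>k<m. (q k i)\<^sup>2) = real m"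
proof -
  have "(\<Sum>i<n. \<Sum>k<m. (q k i)\<^sup>2) = (\<Sum>k<m. vdot n (q k) (q k))"
    unfolding vdot_def by (subst sum.swap) (simp add: power2_eq_square)
  also have "\<dots> = (\<Sum>k<m. 1)" using assms unfolding orthonormal_def by (intro sum.cong) auto
  finally show ?thesis by simp
qed

text \<open>The residuals of the unit vectors have total squared norm \<open>n - m\<close>: for \<open>m < n\<close> one of them
  extends the family, and for \<open>m = n\<close> they all vanish, which makes the rows orthonormal too.\<close>
definition residual :: "nat \<Rightarrow> nat \<Rightarrow> (nat \<Rightarrow> nat \<Rightarrow> real) \<Rightarrow> nat \<Rightarrow> nat \<Rightarrow> real" where
  "residual n m q i = (\<lambda>j. if j < n then (if i = j then 1 else 0) - (\<Sum>k<m. q k i * q k j) else 0)"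

lemma vdot_residual_left:
  assumes "i < n"
  shows "vdot n (residual n m q i) z = z i - (\<Sum>k<m. q k i * vdot n (q k) z)"
proof -
  have "vdot n (residual n m q i) z
      = vdot n (\<lambda>j. 1 * (if i = j then 1 else 0) + (-1) * (\<Sum>k<m. q k i * q k j)) z"
    by (rule vdot_cong) (auto simp: residual_def)
  also have "\<dots> = z i - (\<Sum>k<m. q k i * vdot n (q k) z)"
    by (subst vdot_lincomb_left) (simp add: vdot_unit_left assms vdot_sum_left)
  finally show ?thesis .
qed

lemma residual_perp:
  assumes on: "orthonormal n m q" and "i < n" "k < m"
  shows "vdot n (residual n m q i) (q k) = 0"
proof -
  have "(\<Sum>k'<m. q k' i * vdot n (q k') (q k)) = (\<Sum>k'<m. if k' = k then q k' i else 0)"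
    using on \<open>k < m\<close> unfolding orthonormal_def by (intro sum.cong) auto
  then show ?thesis using assms by (simp add: vdot_residual_left)
qed

lemma residual_total_norm:
  assumes on: "orthonormal n m q"
  shows "(\<Sum>i<n. vdot n (residual n m q i) (residual n m q i)) = real n - real m"
proof -
  have "vdot n (residual n m q i) (residual n m q i) = 1 - (\<Sum>k<m. (q k i)\<^sup>2)" if "i < n" for i
  proof -
    have "(\<Sum>k<m. q k i * vdot n (q k) (residual n m q i)) = 0"
      using residual_perp[OF on that] by (intro sum.neutral) (auto simp: vdot_commute)
    then show ?thesis
      using that by (subst vdot_residual_left) (simp_all add: residual_def power2_eq_square)
  qed
  then have "(\<Sum>i<n. vdot n (residual n m q i) (residual n m q i)) = (\<Sum>i<n. 1 - (\<Sum>k<m. (q k i)\<^sup>2))"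
    by (intro sum.cong) auto
  also have "\<dots> = real n - real m" using orthonormal_sum_squares[OF on] by (simp add: sum_subtractf)
  finally show ?thesis .
qed

lemma orthonormal_square_rows:
  assumes on: "orthonormal n n q" and "i < n" "j < n"
  shows "(\<Sum>k<n. q k i * q k j) = (if i = j then 1 else 0)"
proof -
  have "(\<Sum>i<n. vdot n (residual n n q i) (residual n n q i)) = 0"
    using residual_total_norm[OF on] by simp
  then have "vdot n (residual n n q i) (residual n n q i) = 0"
    using \<open>i < n\<close> by (subst (asm) sum_nonneg_eq_0_iff) (auto simp: vdot_self_nonneg)
  from vdot_self_eq_0D[OF this \<open>j < n\<close>] show ?thesis unfolding residual_def using \<open>j < n\<close> by auto
qed

lemma perp_space_unit_vector:
  assumes on: "orthonormal n m q" and "m < n"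
  shows "\<exists>x\<in>perp_space n m q. vdot n x x = 1"
proof -
  have "\<exists>i<n. 0 < vdot n (residual n m q i) (residual n m q i)"
  proof (rule ccontr)
    assume "\<not> ?thesis"
    then have "(\<Sum>i<n. vdot n (residual n m q i) (residual n m q i)) \<le> 0"
      by (intro sum_nonpos) auto
    with residual_total_norm[OF on] \<open>m < n\<close> show False by simp
  qed
  then obtain i where "i < n" and pos: "0 < vdot n (residual n m q i) (residual n m q i)"
    by blast
  obtain c where c: "vdot n (\<lambda>j. c * residual n m q i j) (\<lambda>j. c * residual n m q i j) = 1"
    using normalize_vector[OF pos] by blast
  have "(\<lambda>j. c * residual n m q i j) \<in> perp_space n m q"
    using residual_perp[OF on \<open>i < n\<close>] unfolding perp_space_def
    by (auto simp: vdot_scale_left residual_def)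
  with c show ?thesis by blast
qed

lemma closed_perp_space: "closed (perp_space n m q)"
proof -
  have coord: "continuous_on UNIV (\<lambda>x::nat \<Rightarrow> real. x i)" for i
    by (rule continuous_on_product_coordinates)
  have "perp_space n m q = (\<Inter>i\<in>{n..}. {x. x i = 0}) \<inter> (\<Inter>k\<in>{..<m}. {x. vdot n x (q k) = 0})"
    unfolding perp_space_def by auto
  then show ?thesis unfolding vdot_def
    by (simp only:) (intro closed_Int closed_INT ballI closed_Collect_eq coord continuous_intros)
qed

lemma compact_unit_sphere_perp_space: "compact (perp_space n m q \<inter> {x. vdot n x x = 1})"
proof -
  have coord: "continuous_on UNIV (\<lambda>x::nat \<Rightarrow> real. x i)" for i
    by (rule continuous_on_product_coordinates)
  have "compactin (product_topology (\<lambda>_. euclidean) UNIV) (PiE UNIV (\<lambda>_::nat. {-1..1::real}))"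
    by (subst compactin_PiE) auto
  then have box: "compact (PiE UNIV (\<lambda>_::nat. {-1..1::real}))"
    by (simp add: euclidean_product_topology)
  have "x i \<in> {-1..1}" if "x \<in> perp_space n m q" "vdot n x x = 1" for x i
  proof (cases "i < n")
    case True
    have "(x i)\<^sup>2 \<le> (\<Sum>j<n. x j * x j)"
      using True by (subst sum.remove[of _ i]) (auto simp: power2_eq_square intro!: sum_nonneg)
    then show ?thesis using that by (simp add: vdot_def abs_square_le_1 abs_le_iff)
  qed (use that in \<open>auto simp: perp_space_def\<close>)
  then have sub: "perp_space n m q \<inter> {x. vdot n x x = 1} \<subseteq> PiE UNIV (\<lambda>_. {-1..1})"
    by (auto simp: PiE_UNIV_domain)
  have "closed (perp_space n m q \<inter> {x. vdot n x x = 1})"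
    unfolding vdot_def
    by (intro closed_Int closed_perp_space closed_Collect_eq coord continuous_intros)
  from compact_Int_closed[OF box this] show ?thesis using sub by (simp add: Int_absorb1)
qed

lemma rayleigh_maximiser_exists:
  assumes "orthonormal n m q" "m < n"
  obtains x where "x \<in> perp_space n m q" "vdot n x x = 1"
    "\<And>z. z \<in> perp_space n m q \<Longrightarrow> bilin n Y z z \<le> bilin n Y x x * vdot n z z"
proof -
  let ?K = "perp_space n m q \<inter> {x. vdot n x x = 1}"
  have cont: "continuous_on ?K (\<lambda>x. bilin n Y x x)"
    unfolding bilin_def
    by (intro continuous_intros continuous_on_subset[OF continuous_on_product_coordinates]) auto
  have "?K \<noteq> {}" using perp_space_unit_vector[OF assms] by blast
  from continuous_attains_sup[OF compact_unit_sphere_perp_space this cont]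
  obtain x where x: "x \<in> ?K" and max: "\<And>y. y \<in> ?K \<Longrightarrow> bilin n Y y y \<le> bilin n Y x x"
    by blast
  have "bilin n Y z z \<le> bilin n Y x x * vdot n z z" if z: "z \<in> perp_space n m q" for z
  proof (cases "vdot n z z = 0")
    case True
    then show ?thesis using vdot_self_eq_0D[OF True] by (simp add: bilin_def)
  next
    case False
    then have "0 < vdot n z z" using vdot_self_nonneg[of n z] by linarith
    then obtain c where "0 < c" and c: "vdot n (\<lambda>i. c * z i) (\<lambda>i. c * z i) = 1"
      by (rule normalize_vector)
    have "(\<lambda>i. c * z i) \<in> perp_space n m q"
      using z by (auto simp: perp_space_def vdot_scale_left)
    then have "bilin n Y (\<lambda>i. c * z i) (\<lambda>i. c * z i) \<le> bilin n Y x x" using max c by blast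
    then have "c * c * bilin n Y z z \<le> bilin n Y x x * (c * c * vdot n z z)"
      using c by (simp add: bilin_scale_self vdot_scale_left vdot_scale_right mult.assoc)
    then show ?thesis using \<open>0 < c\<close> by (simp add: algebra_simps)
  qed
  with x show thesis using that by blast
qed

lemma nonpos_if_linear_le_quadratic:
  fixes a b :: real
  assumes "\<And>t. 0 < t \<Longrightarrow> a * t \<le> b * t\<^sup>2"
  shows "a \<le> 0"
proof (rule ccontr)
  assume "\<not> a \<le> 0"
  define t where "t = a / (\<bar>b\<bar> + 1)"
  have "0 < t" using \<open>\<not> a \<le> 0\<close> by (simp add: t_def add_pos_nonneg)
  have "a \<le> b * t" using assms[OF \<open>0 < t\<close>] \<open>0 < t\<close> by (simp add: power2_eq_square)
  also have "\<dots> \<le> \<bar>b\<bar> * t" using \<open>0 < t\<close> by (simp add: mult_right_mono)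
  also have "\<dots> < a" using \<open>\<not> a \<le> 0\<close> by (simp add: t_def field_simps)
  finally show False by simp
qed

lemma rayleigh_maximiser_eigenvector:
  assumes sym: "msym n Y" and on: "orthonormal n m q"
    and eig: "\<And>k i. k < m \<Longrightarrow> i < n \<Longrightarrow> mvmul n Y (q k) i = lam k * q k i"
    and x: "x \<in> perp_space n m q" "vdot n x x = 1"
    and max: "\<And>z. z \<in> perp_space n m q \<Longrightarrow> bilin n Y z z \<le> bilin n Y x x * vdot n z z"
  shows "i < n \<Longrightarrow> mvmul n Y x i = bilin n Y x x * x i"
proof -
  define \<mu> where "\<mu> = bilin n Y x x"
  define h where "h = (\<lambda>i. if i < n then mvmul n Y x i - \<mu> * x i else 0)"
  have h_eq: "vdot n z h = vdot n z (\<lambda>i. 1 * mvmul n Y x i + (- \<mu>) * x i)" for z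
    by (rule vdot_cong) (auto simp: h_def)
  have "vdot n h (q k) = 0" if "k < m" for k
  proof -
    have "vdot n (mvmul n Y x) (q k) = vdot n x (\<lambda>i. lam k * q k i)"
      unfolding vdot_mvmul_commute[OF sym] by (rule vdot_cong) (auto simp: eig that)
    then show ?thesis using x that
      by (simp only: vdot_commute[of n h] h_eq vdot_lincomb_right vdot_commute[of n "q k"])
         (simp add: vdot_scale_right perp_space_def)
  qed
  then have h_perp: "h \<in> perp_space n m q" by (simp add: perp_space_def h_def)
  have xh: "vdot n x h = 0"
    using x(2) by (simp only: h_eq vdot_lincomb_right) (simp add: bilin_eq_vdot_mvmul \<mu>_def)
  have hx: "bilin n Y h x = vdot n h h"
  proof -
    have "bilin n Y h x = vdot n h (\<lambda>i. 1 * h i + \<mu> * x i)"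
      unfolding bilin_eq_vdot_mvmul by (rule vdot_cong) (auto simp: h_def)
    then show ?thesis
      using xh by (simp only: vdot_lincomb_right) (simp add: vdot_commute)
  qed
  txt \<open>Maximality along \<open>x + t h\<close>, with \<open>h \<bottom> x\<close>, leaves a first-order term \<open>2 t |h|\<^sup>2\<close> that
    cannot be dominated by \<open>O(t\<^sup>2)\<close> unless \<open>h = 0\<close>.\<close>
  have expansion: "2 * vdot n h h * t \<le> (\<mu> * vdot n h h - bilin n Y h h) * t\<^sup>2" for t
  proof -
    have "(\<lambda>i. x i + t * h i) \<in> perp_space n m q"
      using x(1) h_perp by (auto simp: perp_space_def vdot_add_scaled_left)
    from max[OF this] show ?thesis
      unfolding bilin_add_scaled_self vdot_add_scaled_self
      using bilin_commute[OF sym, of x h] hx xh x(2) by (simp add: \<mu>_def algebra_simps)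
  qed
  have "2 * vdot n h h \<le> 0"
    by (rule nonpos_if_linear_le_quadratic, rule expansion)
  then have "vdot n h h = 0" using vdot_self_nonneg[of n h] by simp
  from vdot_self_eq_0D[OF this] show "i < n \<Longrightarrow> mvmul n Y x i = \<mu> * x i"
    by (simp add: h_def)
qed

lemma orthonormal_eigenvectors_exist:
  assumes sym: "msym n Y" and "m \<le> n"
  shows "\<exists>q lam. orthonormal n m q \<and> (\<forall>k<m. \<forall>i<n. mvmul n Y (q k) i = lam k * q k i)"
  using \<open>m \<le> n\<close>
proof (induction m)
  case 0
  then show ?case by (auto simp: orthonormal_def)
next
  case (Suc m)
  then obtain q lam where on: "orthonormal n m q"
    and eig: "\<forall>k<m. \<forall>i<n. mvmul n Y (q k) i = lam k * q k i"
    by auto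
  obtain x where x: "x \<in> perp_space n m q" "vdot n x x = 1"
    and max: "\<And>z. z \<in> perp_space n m q \<Longrightarrow> bilin n Y z z \<le> bilin n Y x x * vdot n z z"
    using rayleigh_maximiser_exists[OF on] Suc.prems by (metis Suc_le_eq)
  have x_eig: "\<forall>i<n. mvmul n Y x i = bilin n Y x x * x i"
    using rayleigh_maximiser_eigenvector[OF sym on _ x max] eig by blast
  have "orthonormal n (Suc m) (q(m := x))"
    unfolding orthonormal_def
  proof (intro allI impI)
    fix a b assume "a < Suc m" "b < Suc m"
    then consider "a = m" "b = m" | "a = m" "b < m" | "a < m" "b = m" | "a < m" "b < m"
      by linarith
    then show "vdot n ((q(m := x)) a) ((q(m := x)) b) = (if a = b then 1 else 0)"
      by cases (use on x in \<open>auto simp: orthonormal_def perp_space_def vdot_commute[of n "q a"]\<close>)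
  qed
  moreover have "\<forall>k<Suc m. \<forall>i<n. mvmul n Y ((q(m := x)) k) i = (lam(m := bilin n Y x x)) k * (q(m := x)) k i"
    using eig x_eig by (auto simp: less_Suc_eq)
  ultimately show ?case by blast
qed

section \<open>Consequences of the spectral decomposition\<close>

lemma msym_symm_of: "msym n (symm_of n y)"
  unfolding msym_def symm_of_def by (auto simp: min.commute max.commute)

lemma posdef_msym: "posdef n Y \<Longrightarrow> msym n Y"
  unfolding posdef_def msym_def by auto

lemma spec_decomp_exists:
  assumes "msym n Y"
  shows "\<exists>Q l. spec_decomp n Y Q l"
proof -
  obtain q lam where on: "orthonormal n n q"
    and eig: "\<forall>k<n. \<forall>i<n. mvmul n Y (q k) i = lam k * q k i"
    using orthonormal_eigenvectors_exist[OF assms order.refl] by blast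
  have "Y i j = (\<Sum>k<n. q k i * lam k * q k j)" if "i < n" "j < n" for i j
  proof -
    have "Y i j = (\<Sum>l<n. Y i l * (if l = j then 1 else 0))"
      using \<open>j < n\<close> by (simp add: if_distrib[of "\<lambda>a. _ * a"] cong: if_cong)
    also have "\<dots> = (\<Sum>l<n. Y i l * (\<Sum>k<n. q k l * q k j))"
      using orthonormal_square_rows[OF on] \<open>j < n\<close> by (intro sum.cong) auto
    also have "\<dots> = (\<Sum>k<n. \<Sum>l<n. Y i l * q k l * q k j)"
      by (subst sum.swap) (simp add: sum_distrib_left mult.assoc)
    also have "\<dots> = (\<Sum>k<n. mvmul n Y (q k) i * q k j)"
      unfolding mvmul_def by (simp add: sum_distrib_right)
    also have "\<dots> = (\<Sum>k<n. q k i * lam k * q k j)"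
      using eig \<open>i < n\<close> by (intro sum.cong) auto
    finally show ?thesis .
  qed
  then have "spec_decomp n Y (\<lambda>i k. q k i) lam"
    using on unfolding spec_decomp_def orthonormal_def vdot_def by auto
  then show ?thesis by blast
qed

lemma spec_decomp_cols:
  "spec_decomp n Y Q l \<Longrightarrow> i < n \<Longrightarrow> j < n \<Longrightarrow> (\<Sum>k<n. Q k i * Q k j) = (if i = j then 1 else 0)"
  unfolding spec_decomp_def by auto

lemma spec_decomp_rows:
  assumes "spec_decomp n Y Q l" "i < n" "j < n"
  shows "(\<Sum>k<n. Q i k * Q j k) = (if i = j then 1 else 0)"
proof -
  have "orthonormal n n (\<lambda>k i. Q i k)"
    using assms(1) unfolding spec_decomp_def orthonormal_def vdot_def by auto
  from orthonormal_square_rows[OF this assms(2,3)] show ?thesis .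
qed

definition eigvecs :: "nat \<Rightarrow> (nat \<Rightarrow> nat \<Rightarrow> real) \<Rightarrow> nat \<Rightarrow> nat \<Rightarrow> real" where
  "eigvecs n Y = fst (SOME (Q, l). spec_decomp n Y Q l)"

definition eigvals :: "nat \<Rightarrow> (nat \<Rightarrow> nat \<Rightarrow> real) \<Rightarrow> nat \<Rightarrow> real" where
  "eigvals n Y = snd (SOME (Q, l). spec_decomp n Y Q l)"

lemma mfun_eq_eig:
  "mfun n f Y = (\<lambda>i j. \<Sum>k<n. of_real (eigvecs n Y i k) * f (eigvals n Y k) * of_real (eigvecs n Y j k))"
  unfolding mfun_def eigvecs_def eigvals_def by (simp add: Let_def split_beta)

lemma spec_decomp_eig:
  assumes "msym n Y"
  shows "spec_decomp n Y (eigvecs n Y) (eigvals n Y)"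
proof -
  have "\<exists>Ql. (\<lambda>(Q, l). spec_decomp n Y Q l) Ql" using spec_decomp_exists[OF assms] by auto
  from someI_ex[OF this] show ?thesis unfolding eigvecs_def eigvals_def by (simp add: case_prod_unfold)
qed

lemma sum_orthogonal_products:
  fixes Q :: "nat \<Rightarrow> nat \<Rightarrow> real"
  assumes orth: "\<And>a b. a < n \<Longrightarrow> b < n \<Longrightarrow> (\<Sum>m<n. Q m a * Q m b) = (if a = b then 1 else 0)"
  shows "(\<Sum>m<n. (\<Sum>k<n. A k * Q m k) * (\<Sum>k<n. Q m k * B k)) = (\<Sum>k<n. A k * B k)"
proof -
  have "(\<Sum>m<n. (\<Sum>k<n. A k * Q m k) * (\<Sum>k<n. Q m k * B k))
      = (\<Sum>m<n. \<Sum>a<n. \<Sum>b<n. A a * B b * (Q m a * Q m b))"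
    by (simp add: sum_product mult_ac)
  also have "\<dots> = (\<Sum>a<n. \<Sum>b<n. \<Sum>m<n. A a * B b * (Q m a * Q m b))"
    by (subst sum.swap) (rule sum.cong[OF refl], rule sum.swap)
  also have "\<dots> = (\<Sum>a<n. \<Sum>b<n. A a * B b * (\<Sum>m<n. Q m a * Q m b))"
    by (simp add: sum_distrib_left)
  also have "\<dots> = (\<Sum>a<n. \<Sum>b<n. if a = b then A a * B b else 0)"
    using orth by (intro sum.cong refl) auto
  finally show ?thesis by simp
qed

lemma bilin_spec_decomp:
  assumes "spec_decomp n Y Q l"
  shows "bilin n Y x x = (\<Sum>k<n. l k * (\<Sum>i<n. Q i k * x i)\<^sup>2)"
proof -
  have "bilin n Y x x = (\<Sum>i<n. \<Sum>j<n. x i * (\<Sum>k<n. Q i k * l k * Q j k) * x j)"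
    using assms unfolding bilin_def spec_decomp_def by (intro sum.cong refl) auto
  also have "\<dots> = (\<Sum>i<n. \<Sum>j<n. \<Sum>k<n. l k * ((Q i k * x i) * (Q j k * x j)))"
    by (simp add: sum_distrib_left sum_distrib_right mult_ac)
  also have "\<dots> = (\<Sum>i<n. \<Sum>k<n. \<Sum>j<n. l k * ((Q i k * x i) * (Q j k * x j)))"
    by (rule sum.cong[OF refl], rule sum.swap)
  also have "\<dots> = (\<Sum>k<n. \<Sum>i<n. \<Sum>j<n. l k * ((Q i k * x i) * (Q j k * x j)))"
    by (rule sum.swap)
  also have "\<dots> = (\<Sum>k<n. l k * ((\<Sum>i<n. Q i k * x i) * (\<Sum>j<n. Q j k * x j)))"
    unfolding sum_product by (simp only: sum_distrib_left)
  finally show ?thesis by (simp add: power2_eq_square)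
qed

lemma spec_decomp_parseval:
  assumes "spec_decomp n Y Q l"
  shows "(\<Sum>k<n. (\<Sum>i<n. Q i k * x i)\<^sup>2) = vdot n x x"
  using sum_orthogonal_products[of n "\<lambda>m k. Q k m" x x] spec_decomp_rows[OF assms]
  by (simp add: power2_eq_square vdot_def mult.commute)

lemma spec_decomp_eigenvalue:
  assumes "spec_decomp n Y Q l" "k < n"
  shows "bilin n Y (\<lambda>i. Q i k) (\<lambda>i. Q i k) = l k"
proof -
  have "(\<Sum>m<n. l m * (\<Sum>i<n. Q i m * Q i k)\<^sup>2) = (\<Sum>m<n. if m = k then l m else 0)"
    using spec_decomp_cols[OF assms(1)] assms(2) by (intro sum.cong) auto
  then show ?thesis using assms by (simp add: bilin_spec_decomp)
qed

lemma posdef_eigenvalue_pos: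
  assumes pd: "posdef n Y" and sd: "spec_decomp n Y Q l" and "k < n"
  shows "0 < l k"
proof -
  have "(\<Sum>i<n. Q i k * Q i k) = 1" using spec_decomp_cols[OF sd \<open>k < n\<close> \<open>k < n\<close>] by simp
  then have "\<exists>i<n. Q i k \<noteq> 0"
    by (rule contrapos_pp) simp
  with pd[unfolded posdef_def, THEN conjunct2, THEN spec[of _ "\<lambda>i. Q i k"]]
  have "0 < bilin n Y (\<lambda>i. Q i k) (\<lambda>i. Q i k)" unfolding bilin_def by blast
  then show ?thesis using spec_decomp_eigenvalue[OF sd \<open>k < n\<close>] by simp
qed

lemma posdef_if_eigenvalues_pos:
  assumes sym: "msym n Y" and sd: "spec_decomp n Y Q l" and pos: "\<And>k. k < n \<Longrightarrow> 0 < l k"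
  shows "posdef n Y"
  unfolding posdef_def
proof (intro conjI allI impI)
  show "\<And>i j. i < n \<Longrightarrow> j < n \<Longrightarrow> Y i j = Y j i" using sym unfolding msym_def by auto
next
  fix x :: "nat \<Rightarrow> real" assume "\<exists>i<n. x i \<noteq> 0"
  then have "vdot n x x \<noteq> 0" using vdot_self_eq_0D by blast
  then obtain k where "k < n" "(\<Sum>i<n. Q i k * x i)\<^sup>2 \<noteq> 0"
    unfolding spec_decomp_parseval[OF sd, symmetric] by (meson lessThan_iff sum.neutral)
  then have "0 < (\<Sum>k<n. l k * (\<Sum>i<n. Q i k * x i)\<^sup>2)"
    using pos by (intro sum_pos2[of _ k]) (auto intro!: mult_nonneg_nonneg simp: less_imp_le)
  then show "0 < (\<Sum>i<n. \<Sum>j<n. x i * Y i j * x j)" using bilin_spec_decomp[OF sd] unfolding bilin_def by simp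
qed

lemma posdef_iff_eigvals_pos: "msym n Y \<Longrightarrow> posdef n Y \<longleftrightarrow> (\<forall>k<n. 0 < eigvals n Y k)"
  using posdef_eigenvalue_pos posdef_if_eigenvalues_pos spec_decomp_eig by blast

lemma posdef_coercive:
  assumes pd: "posdef n V"
  obtains v where "0 < v" "\<And>x. v * vdot n x x \<le> bilin n V x x"
proof -
  obtain Q l where sd: "spec_decomp n V Q l" using spec_decomp_exists[OF posdef_msym[OF pd]] by blast
  define v where "v = Min (insert 1 (l ` {..<n}))"
  have "0 < v" unfolding v_def using posdef_eigenvalue_pos[OF pd sd] by (subst Min_gr_iff) auto
  moreover have "v * vdot n x x \<le> bilin n V x x" for x
  proof -
    have "v \<le> l k" if "k < n" for k unfolding v_def using that by (intro Min_le) auto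
    then have "(\<Sum>k<n. v * (\<Sum>i<n. Q i k * x i)\<^sup>2) \<le> (\<Sum>k<n. l k * (\<Sum>i<n. Q i k * x i)\<^sup>2)"
      by (intro sum_mono mult_right_mono) auto
    then show ?thesis
      by (simp add: bilin_spec_decomp[OF sd] spec_decomp_parseval[OF sd, symmetric] sum_distrib_left)
  qed
  ultimately show thesis by (rule that)
qed

lemma mtrace_mfun:
  fixes f :: "real \<Rightarrow> 'a::real_algebra_1"
  assumes "msym n Y"
  shows "mtrace n (mfun n f Y) = (\<Sum>k<n. f (eigvals n Y k))"
proof -
  have "mtrace n (mfun n f Y) = (\<Sum>i<n. \<Sum>k<n. (eigvecs n Y i k * eigvecs n Y i k) *\<^sub>R f (eigvals n Y k))"
    unfolding mtrace_def mfun_eq_eig by (simp add: of_real_def)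
  also have "\<dots> = (\<Sum>k<n. (\<Sum>i<n. eigvecs n Y i k * eigvecs n Y i k) *\<^sub>R f (eigvals n Y k))"
    by (subst sum.swap) (simp add: scaleR_sum_left)
  also have "\<dots> = (\<Sum>k<n. f (eigvals n Y k))"
    using spec_decomp_cols[OF spec_decomp_eig[OF assms]] by (intro sum.cong refl) auto
  finally show ?thesis .
qed

section \<open>Measurability of the functional calculus\<close>

abbreviation lborel_upper :: "nat \<Rightarrow> (nat \<times> nat \<Rightarrow> real) measure" where
  "lborel_upper n \<equiv> PiM (upper n) (\<lambda>_. lborel)"

lemma measurable_symm_of [measurable]:
  assumes "i < n" "j < n"
  shows "(\<lambda>y. symm_of n y i j) \<in> borel_measurable (lborel_upper n)"
proof -
  have "(min i j, max i j) \<in> upper n" using assms unfolding upper_def by auto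
  then show ?thesis unfolding symm_of_def by measurable
qed

text \<open>Quantifying over all spectral decompositions, rather than the one chosen by \<^const>\<open>mfun\<close>,
  makes this class closed under products and limits.\<close>
definition calculus_measurable :: "nat \<Rightarrow> (real \<Rightarrow> real) \<Rightarrow> bool" where
  "calculus_measurable n f \<longleftrightarrow> (\<exists>G.
     (\<forall>i<n. \<forall>j<n. (\<lambda>y. G y i j) \<in> borel_measurable (lborel_upper n)) \<and>
     (\<forall>y Q l. spec_decomp n (symm_of n y) Q l \<longrightarrow>
        (\<forall>i<n. \<forall>j<n. G y i j = (\<Sum>k<n. Q i k * f (l k) * Q j k))))"

lemma calculus_measurableI:
  assumes "\<And>i j. i < n \<Longrightarrow> j < n \<Longrightarrow> (\<lambda>y. G y i j) \<in> borel_measurable (lborel_upper n)"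
    and "\<And>y Q l i j. spec_decomp n (symm_of n y) Q l \<Longrightarrow> i < n \<Longrightarrow> j < n \<Longrightarrow>
           G y i j = (\<Sum>k<n. Q i k * f (l k) * Q j k)"
  shows "calculus_measurable n f"
  using assms unfolding calculus_measurable_def by blast

lemma calculus_measurableE:
  assumes "calculus_measurable n f"
  obtains G where "\<And>i j. i < n \<Longrightarrow> j < n \<Longrightarrow> (\<lambda>y. G y i j) \<in> borel_measurable (lborel_upper n)"
    and "\<And>y Q l i j. spec_decomp n (symm_of n y) Q l \<Longrightarrow> i < n \<Longrightarrow> j < n \<Longrightarrow>
           G y i j = (\<Sum>k<n. Q i k * f (l k) * Q j k)"
proof -
  from assms obtain G where "\<forall>i<n. \<forall>j<n. (\<lambda>y. G y i j) \<in> borel_measurable (lborel_upper n)"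
    "\<forall>y Q l. spec_decomp n (symm_of n y) Q l \<longrightarrow>
        (\<forall>i<n. \<forall>j<n. G y i j = (\<Sum>k<n. Q i k * f (l k) * Q j k))"
    unfolding calculus_measurable_def by blast
  then show thesis by (intro that[of G]) auto
qed

lemma measurable_mfun:
  assumes "calculus_measurable n f" "i < n" "j < n"
  shows "(\<lambda>y. mfun n f (symm_of n y) i j) \<in> borel_measurable (lborel_upper n)"
proof -
  obtain G where G: "\<And>i j. i < n \<Longrightarrow> j < n \<Longrightarrow> (\<lambda>y. G y i j) \<in> borel_measurable (lborel_upper n)"
    and G_eq: "\<And>y Q l i j. spec_decomp n (symm_of n y) Q l \<Longrightarrow> i < n \<Longrightarrow> j < n \<Longrightarrow>
       G y i j = (\<Sum>k<n. Q i k * f (l k) * Q j k)"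
    using calculus_measurableE[OF assms(1)] by blast
  have "mfun n f (symm_of n y) i j = G y i j" for y
    using G_eq[OF spec_decomp_eig[OF msym_symm_of] assms(2,3)] by (simp add: mfun_eq_eig)
  then show ?thesis using G[OF assms(2,3)] by simp
qed

lemma calculus_measurable_const: "calculus_measurable n (\<lambda>t. c)"
proof (rule calculus_measurableI[where G = "\<lambda>y i j. if i = j then c else 0"])
  fix y Q l i j assume "spec_decomp n (symm_of n y) Q l" "i < n" "j < n"
  then show "(if i = j then c else 0) = (\<Sum>k<n. Q i k * c * Q j k)"
    using spec_decomp_rows by (simp add: sum_distrib_left[symmetric] mult_ac)
qed auto

lemma calculus_measurable_id: "calculus_measurable n (\<lambda>t. t)"
  by (rule calculus_measurableI[where G = "\<lambda>y. symm_of n y"]) (auto simp: spec_decomp_def)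

lemma calculus_measurable_add:
  assumes "calculus_measurable n f" "calculus_measurable n g"
  shows "calculus_measurable n (\<lambda>t. f t + g t)"
proof -
  obtain F where "\<And>i j. i < n \<Longrightarrow> j < n \<Longrightarrow> (\<lambda>y. F y i j) \<in> borel_measurable (lborel_upper n)"
    "\<And>y Q l i j. spec_decomp n (symm_of n y) Q l \<Longrightarrow> i < n \<Longrightarrow> j < n \<Longrightarrow>
       F y i j = (\<Sum>k<n. Q i k * f (l k) * Q j k)"
    using calculus_measurableE[OF assms(1)] by blast
  moreover obtain G where "\<And>i j. i < n \<Longrightarrow> j < n \<Longrightarrow> (\<lambda>y. G y i j) \<in> borel_measurable (lborel_upper n)"
    "\<And>y Q l i j. spec_decomp n (symm_of n y) Q l \<Longrightarrow> i < n \<Longrightarrow> j < n \<Longrightarrow>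
       G y i j = (\<Sum>k<n. Q i k * g (l k) * Q j k)"
    using calculus_measurableE[OF assms(2)] by blast
  ultimately show ?thesis
    by (intro calculus_measurableI[where G = "\<lambda>y i j. F y i j + G y i j"])
       (auto simp: algebra_simps sum.distrib)
qed

text \<open>Products of functions correspond to matrix products, by orthogonality of \<open>Q\<close>.\<close>
lemma calculus_measurable_mult:
  assumes "calculus_measurable n f" "calculus_measurable n g"
  shows "calculus_measurable n (\<lambda>t. f t * g t)"
proof -
  obtain F where F: "\<And>i j. i < n \<Longrightarrow> j < n \<Longrightarrow> (\<lambda>y. F y i j) \<in> borel_measurable (lborel_upper n)"
    and F_eq: "\<And>y Q l i j. spec_decomp n (symm_of n y) Q l \<Longrightarrow> i < n \<Longrightarrow> j < n \<Longrightarrow>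
       F y i j = (\<Sum>k<n. Q i k * f (l k) * Q j k)"
    using calculus_measurableE[OF assms(1)] by blast
  obtain G where G: "\<And>i j. i < n \<Longrightarrow> j < n \<Longrightarrow> (\<lambda>y. G y i j) \<in> borel_measurable (lborel_upper n)"
    and G_eq: "\<And>y Q l i j. spec_decomp n (symm_of n y) Q l \<Longrightarrow> i < n \<Longrightarrow> j < n \<Longrightarrow>
       G y i j = (\<Sum>k<n. Q i k * g (l k) * Q j k)"
    using calculus_measurableE[OF assms(2)] by blast
  show ?thesis
  proof (rule calculus_measurableI[where G = "\<lambda>y i j. \<Sum>m<n. F y i m * G y m j"])
    fix i j assume "i < n" "j < n"
    then show "(\<lambda>y. \<Sum>m<n. F y i m * G y m j) \<in> borel_measurable (lborel_upper n)"
      using F G by (intro borel_measurable_sum borel_measurable_times) auto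
  next
    fix y Q l i j assume sd: "spec_decomp n (symm_of n y) Q l" and "i < n" "j < n"
    have "(\<Sum>m<n. F y i m * G y m j)
        = (\<Sum>m<n. (\<Sum>k<n. (Q i k * f (l k)) * Q m k) * (\<Sum>k<n. Q m k * (g (l k) * Q j k)))"
      using F_eq[OF sd \<open>i < n\<close>] G_eq[OF sd _ \<open>j < n\<close>] by (intro sum.cong refl) (auto simp: mult_ac)
    also have "\<dots> = (\<Sum>k<n. (Q i k * f (l k)) * (g (l k) * Q j k))"
      by (rule sum_orthogonal_products) (use sd in \<open>auto simp: spec_decomp_def\<close>)
    finally show "(\<Sum>m<n. F y i m * G y m j) = (\<Sum>k<n. Q i k * (f (l k) * g (l k)) * Q j k)"
      by (simp add: mult_ac)
  qed
qed

lemma calculus_measurable_lim: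
  assumes meas: "\<And>m. calculus_measurable n (F m)" and lim: "\<And>t. (\<lambda>m. F m t) \<longlonglongrightarrow> f t"
  shows "calculus_measurable n f"
proof -
  obtain G where G: "\<And>m i j. i < n \<Longrightarrow> j < n \<Longrightarrow> (\<lambda>y. G m y i j) \<in> borel_measurable (lborel_upper n)"
    and G_eq: "\<And>m y Q l i j. spec_decomp n (symm_of n y) Q l \<Longrightarrow> i < n \<Longrightarrow> j < n \<Longrightarrow>
       G m y i j = (\<Sum>k<n. Q i k * F m (l k) * Q j k)"
  proof -
    have "\<forall>m. \<exists>G. (\<forall>i<n. \<forall>j<n. (\<lambda>y. G y i j) \<in> borel_measurable (lborel_upper n)) \<and>
       (\<forall>y Q l. spec_decomp n (symm_of n y) Q l \<longrightarrow>
          (\<forall>i<n. \<forall>j<n. G y i j = (\<Sum>k<n. Q i k * F m (l k) * Q j k)))"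
      using meas unfolding calculus_measurable_def by blast
    then show thesis using that unfolding choice_iff by blast
  qed
  have conv: "(\<lambda>m. G m y i j) \<longlonglongrightarrow> (\<Sum>k<n. Q i k * f (l k) * Q j k)"
    if "spec_decomp n (symm_of n y) Q l" "i < n" "j < n" for y Q l i j
    unfolding G_eq[OF that] by (intro tendsto_intros lim)
  show ?thesis
  proof (rule calculus_measurableI[where G = "\<lambda>y i j. lim (\<lambda>m. G m y i j)"])
    fix y Q l i j assume "spec_decomp n (symm_of n y) Q l" "i < n" "j < n"
    from conv[OF this] show "lim (\<lambda>m. G m y i j) = (\<Sum>k<n. Q i k * f (l k) * Q j k)"
      by (rule limI)
  next
    fix i j assume "i < n" "j < n"
    show "(\<lambda>y. lim (\<lambda>m. G m y i j)) \<in> borel_measurable (lborel_upper n)"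
    proof (rule borel_measurable_LIMSEQ_real[where u = "\<lambda>m y. G m y i j"])
      fix y
      obtain Q l where "spec_decomp n (symm_of n y) Q l"
        using spec_decomp_exists[OF msym_symm_of] by blast
      from conv[OF this \<open>i < n\<close> \<open>j < n\<close>] show "(\<lambda>m. G m y i j) \<longlonglongrightarrow> lim (\<lambda>m. G m y i j)"
        by (simp add: limI)
    qed (use G \<open>i < n\<close> \<open>j < n\<close> in auto)
  qed
qed

lemma calculus_measurable_polynomial:
  "real_polynomial_function p \<Longrightarrow> calculus_measurable n p"
proof (induction rule: real_polynomial_function.induct)
  case (linear f)
  then obtain c where "f = (\<lambda>x. x * c)" using real_bounded_linear by blast
  then show ?case using calculus_measurable_mult[OF calculus_measurable_id calculus_measurable_const] by simp
qed (auto intro: calculus_measurable_const calculus_measurable_add calculus_measurable_mult)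

lemma calculus_measurable_continuous:
  assumes cont: "continuous_on UNIV h"
  shows "calculus_measurable n h"
proof -
  have "\<exists>p. real_polynomial_function p \<and> (\<forall>x\<in>{- real m..real m}. \<bar>h x - p x\<bar> < inverse (real (Suc m)))"
    for m
  proof -
    obtain p where "real_polynomial_function p"
      "\<And>x. x \<in> {- real m..real m} \<Longrightarrow> \<bar>h x - p x\<bar> < inverse (real (Suc m))"
      using Stone_Weierstrass_real_polynomial_function[of "{- real m..real m}" h "inverse (real (Suc m))"]
        continuous_on_subset[OF cont] by auto
    then show ?thesis by blast
  qed
  then have "\<forall>m. \<exists>p. real_polynomial_function p \<and>
      (\<forall>x\<in>{- real m..real m}. \<bar>h x - p x\<bar> < inverse (real (Suc m)))" ..
  from choice[OF this] obtain p where poly: "\<And>m. real_polynomial_function (p m)"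
    and approx: "\<And>m x. x \<in> {- real m..real m} \<Longrightarrow> \<bar>h x - p m x\<bar> < inverse (real (Suc m))"
    by blast
  show ?thesis
  proof (rule calculus_measurable_lim[OF calculus_measurable_polynomial[OF poly]])
    fix t
    obtain N :: nat where N: "\<bar>t\<bar> \<le> real N" using real_arch_simple by blast
    have "\<forall>\<^sub>F m in sequentially. norm (p m t - h t) \<le> inverse (real (Suc m))"
    proof (rule eventually_sequentiallyI[of N])
      fix m assume "N \<le> m"
      then have "t \<in> {- real m..real m}" using N by auto
      from approx[OF this] show "norm (p m t - h t) \<le> inverse (real (Suc m))" by simp
    qed
    then have "(\<lambda>m. p m t - h t) \<longlonglongrightarrow> 0"
      by (rule Lim_null_comparison[OF _ LIMSEQ_inverse_real_of_nat])
    then show "(\<lambda>m. p m t) \<longlonglongrightarrow> h t" by (rule LIM_zero_cancel)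
  qed
qed

text \<open>For \<open>\<bar>s\<bar> = 1\<close> this covers functions continuous on one open half-line and zero elsewhere:
  they are limits of the continuous cut-offs \<open>min 1 (max 0 (m s t)) F(s max (s t) (1/m))\<close>.\<close>
lemma calculus_measurable_half_line:
  assumes s: "\<bar>s\<bar> = 1" and F: "continuous_on {t. 0 < s * t} F"
  shows "calculus_measurable n (\<lambda>t. if 0 < s * t then F t else 0)"
proof (rule calculus_measurable_lim)
  have ss: "s * (s * x) = x" for x
    using s by (cases "s \<ge> 0") auto
  define c :: "nat \<Rightarrow> real \<Rightarrow> real" where "c m t = s * max (s * t) (inverse (real (Suc m)))" for m t
  fix m :: nat
  have "continuous_on UNIV (c m)" unfolding c_def by (intro continuous_intros)
  moreover have "c m ` UNIV \<subseteq> {t. 0 < s * t}" by (auto simp: c_def ss less_max_iff_disj)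
  ultimately have "continuous_on UNIV (\<lambda>t. F (c m t))" by (rule continuous_on_compose2[OF F])
  then show "calculus_measurable n (\<lambda>t. min 1 (max 0 (real (Suc m) * (s * t))) * F (c m t))"
    by (intro calculus_measurable_continuous continuous_intros)
  fix t :: real
  show "(\<lambda>m. min 1 (max 0 (real (Suc m) * (s * t))) * F (c m t)) \<longlonglongrightarrow> (if 0 < s * t then F t else 0)"
  proof (cases "0 < s * t")
    case True
    obtain N where N: "inverse (real (Suc N)) < s * t" using reals_Archimedean[OF True] by blast
    have "\<forall>\<^sub>F m in sequentially. min 1 (max 0 (real (Suc m) * (s * t))) * F (c m t) = F t"
    proof (rule eventually_sequentiallyI[of N])
      fix m assume "N \<le> m"
      then have "inverse (real (Suc m)) \<le> inverse (real (Suc N))" by (simp add: field_simps)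
      then have lt: "inverse (real (Suc m)) < s * t" using N by linarith
      then have "1 < real (Suc m) * (s * t)" by (simp add: field_simps)
      with lt show "min 1 (max 0 (real (Suc m) * (s * t))) * F (c m t) = F t"
        by (simp add: c_def ss)
    qed
    then show ?thesis using True by (simp add: tendsto_eventually)
  next
    case False
    then have "real (Suc m) * (s * t) \<le> 0" for m by (simp add: mult_nonneg_nonpos)
    then show ?thesis using False by simp
  qed
qed

lemma calculus_measurable_piecewise:
  assumes "continuous_on {0<..} F" "continuous_on {..<0} F" "F 0 = 0"
  shows "calculus_measurable n F"
proof -
  have "calculus_measurable n (\<lambda>t. (if 0 < 1 * t then F t else 0) + (if 0 < -1 * t then F t else 0))"
    using assms(1,2) by (intro calculus_measurable_add calculus_measurable_half_line)
      (auto simp: greaterThan_def lessThan_def neg_0_less_iff_less)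
  moreover have "(\<lambda>t. (if 0 < 1 * t then F t else 0) + (if 0 < -1 * t then F t else 0)) = F"
    using assms(3) by (auto simp: fun_eq_iff)
  ultimately show ?thesis by simp
qed

lemma calculus_measurable_powr: "calculus_measurable n (\<lambda>t. t powr a)"
proof (rule calculus_measurable_piecewise)
  show "continuous_on {0<..} (\<lambda>t::real. t powr a)"
    by (intro continuous_intros) auto
  have "continuous_on {..<0} (\<lambda>t::real. exp (a * ln t))"
    by (intro continuous_intros) auto
  then show "continuous_on {..<0} (\<lambda>t::real. t powr a)"
    by (rule continuous_on_cong[THEN iffD1, rotated 2]) (auto simp: powr_def)
qed simp

lemma continuous_on_cpowr_of_real:
  "continuous_on {0<..} (\<lambda>t. complex_of_real t powr p)"
  "continuous_on {..<0} (\<lambda>t. complex_of_real t powr p)"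
proof -
  have "continuous_on {0<..} (\<lambda>t. exp (p * complex_of_real (ln t)))"
    by (intro continuous_intros) auto
  then show "continuous_on {0<..} (\<lambda>t. complex_of_real t powr p)"
    by (rule continuous_on_cong[THEN iffD1, rotated 2]) (auto simp: powr_def Ln_of_real)
  have "continuous_on {..<0} (\<lambda>t. exp (p * (complex_of_real (ln \<bar>t\<bar>) + complex_of_real pi * \<i>)))"
    by (intro continuous_intros) auto
  then show "continuous_on {..<0} (\<lambda>t. complex_of_real t powr p)"
    by (rule continuous_on_cong[THEN iffD1, rotated 2]) (auto simp: powr_def Ln_of_real')
qed

lemma measurable_mpow_cplx:
  assumes "i < n" "j < n"
  shows "(\<lambda>y. mpow_cplx n (symm_of n y) p i j) \<in> borel_measurable (lborel_upper n)"
proof -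
  have "calculus_measurable n (\<lambda>t. Re (complex_of_real t powr p))"
    "calculus_measurable n (\<lambda>t. Im (complex_of_real t powr p))"
    by (auto intro!: calculus_measurable_piecewise continuous_on_Re continuous_on_Im
        continuous_on_cpowr_of_real)
  note [measurable] = this[THEN measurable_mfun, OF assms]
  have "mfun n (\<lambda>t. complex_of_real t powr p) Y i j
      = complex_of_real (mfun n (\<lambda>t. Re (complex_of_real t powr p)) Y i j)
        + \<i> * complex_of_real (mfun n (\<lambda>t. Im (complex_of_real t powr p)) Y i j)" for Y
    by (rule complex_eqI) (simp_all add: mfun_eq_eig Re_sum Im_sum)
  then show ?thesis unfolding mpow_cplx_def by simp
qed

definition to_mat :: "nat \<Rightarrow> (nat \<Rightarrow> nat \<Rightarrow> real) \<Rightarrow> real Matrix.mat" where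
  "to_mat n A = Matrix.mat n n (\<lambda>(i, j). A i j)"

lemma mdet_eq_det_to_mat: "mdet n A = Determinant.det (to_mat n A)"
  unfolding det_def mdet_def to_mat_def by (simp add: atLeast0LessThan)

lemma to_mat_carrier [simp]: "to_mat n A \<in> carrier_mat n n"
  unfolding to_mat_def by simp

lemma to_mat_mult: "to_mat n A * to_mat n B = to_mat n (\<lambda>i j. \<Sum>k<n. A i k * B k j)"
  unfolding to_mat_def by (rule eq_matI) (auto simp: scalar_prod_def atLeast0LessThan)

lemma to_mat_transpose: "transpose_mat (to_mat n A) = to_mat n (\<lambda>i j. A j i)"
  unfolding to_mat_def by (rule eq_matI) auto

lemma mdet_spec_decomp:
  assumes sd: "spec_decomp n Y Q l"
  shows "mdet n Y = (\<Prod>k<n. l k)"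
proof -
  define D where "D = (\<lambda>i j. if i = j then l i else (0::real))"
  have "to_mat n Y = to_mat n (\<lambda>i j. \<Sum>k<n. (\<Sum>m<n. Q i m * D m k) * Q j k)"
    using sd unfolding to_mat_def spec_decomp_def D_def
    by (intro eq_matI) (auto simp: if_distrib[of "\<lambda>a. _ * a"] cong: if_cong)
  then have Y: "to_mat n Y = to_mat n Q * to_mat n D * transpose_mat (to_mat n Q)"
    by (simp add: to_mat_mult to_mat_transpose)
  have "transpose_mat (to_mat n Q) * to_mat n Q = 1\<^sub>m n"
    using spec_decomp_cols[OF sd] unfolding to_mat_transpose to_mat_mult
    unfolding to_mat_def by (intro eq_matI) auto
  then have det_Q: "Determinant.det (to_mat n Q) * Determinant.det (to_mat n Q) = 1"
    using det_mult[of "transpose_mat (to_mat n Q)" n "to_mat n Q"] det_transpose[of "to_mat n Q" n]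
    by simp
  have "Determinant.det (to_mat n D) = prod_list (diag_mat (to_mat n D))"
    by (rule det_upper_triangular) (auto simp: upper_triangular_def to_mat_def D_def)
  also have "diag_mat (to_mat n D) = map l [0..<n]"
    unfolding diag_mat_def to_mat_def D_def by (auto intro: nth_equalityI)
  finally have det_D: "Determinant.det (to_mat n D) = (\<Prod>k<n. l k)"
    by (simp add: prod.distinct_set_conv_list[symmetric] atLeast0LessThan)
  have "mdet n Y = Determinant.det (to_mat n Q) * Determinant.det (to_mat n D) * Determinant.det (to_mat n Q)"
    unfolding mdet_eq_det_to_mat Y
    by (simp add: det_mult[of _ n] det_transpose[OF to_mat_carrier] mult_carrier_mat[of _ n n _ n])
  then show ?thesis using det_Q det_D by (simp add: mult_ac)
qed

lemma mdet_eq_prod_eigvals: "msym n Y \<Longrightarrow> mdet n Y = (\<Prod>k<n. eigvals n Y k)"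
  by (rule mdet_spec_decomp[OF spec_decomp_eig])

lemma Pset_iff_eigvals_pos: "y \<in> Pset n \<longleftrightarrow> (\<forall>k<n. 0 < eigvals n (symm_of n y) k)"
  unfolding Pset_def using posdef_iff_eigvals_pos[OF msym_symm_of] by simp

text \<open>For \<open>f\<close> the indicator of \<open>(0, \<infinity>)\<close>, the trace of \<open>f(Y)\<close> counts the positive eigenvalues,
  so \<open>Y\<close> is positive definite iff it equals \<open>n\<close>.\<close>
lemma measurable_indicator_Pset [measurable]: "(\<lambda>y. indicator (Pset n) y :: real) \<in> borel_measurable (lborel_upper n)"
proof -
  let ?pos = "\<lambda>t::real. if 0 < t then 1 else 0 :: real"
  have "calculus_measurable n ?pos"
    using calculus_measurable_half_line[of 1 "\<lambda>_. 1"] by simp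
  then have [measurable]: "(\<lambda>y. mtrace n (mfun n ?pos (symm_of n y))) \<in> borel_measurable (lborel_upper n)"
    unfolding mtrace_def by (intro borel_measurable_sum measurable_mfun) auto
  have "(\<Sum>k<n. ?pos (eigvals n Y k)) = real n \<longleftrightarrow> (\<forall>k<n. 0 < eigvals n Y k)" for Y
  proof
    assume count: "(\<Sum>k<n. ?pos (eigvals n Y k)) = real n"
    show "\<forall>k<n. 0 < eigvals n Y k"
    proof (rule ccontr)
      assume "\<not> ?thesis"
      then obtain k where "k < n" "\<not> 0 < eigvals n Y k" by blast
      then have "(\<Sum>k<n. ?pos (eigvals n Y k)) < (\<Sum>k<n. 1)"
        by (intro sum_strict_mono_ex1) auto
      with count show False by simp
    qed
  qed simp
  then have "(\<lambda>y. indicator (Pset n) y :: real)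
      = (\<lambda>y. if mtrace n (mfun n ?pos (symm_of n y)) = real n then 1 else 0)"
    by (simp add: mtrace_mfun[OF msym_symm_of] Pset_iff_eigvals_pos indicator_def of_bool_def)
  then show ?thesis by simp
qed

lemma measurable_mdet [measurable]: "(\<lambda>y. mdet n (symm_of n y)) \<in> borel_measurable (lborel_upper n)"
  unfolding mdet_def
proof (intro borel_measurable_sum borel_measurable_times borel_measurable_const borel_measurable_prod)
  fix p i assume "p \<in> {p. p permutes {..<n}}" "i \<in> {..<n}"
  then have "p i < n" using permutes_in_image[of p "{..<n}" i] by auto
  then show "(\<lambda>y. symm_of n y i (p i)) \<in> borel_measurable (lborel_upper n)" using \<open>i \<in> {..<n}\<close> by simp
qed

lemma measurable_mtrace_mpow_cplx [measurable]:
  "(\<lambda>y. mtrace n (mpow_cplx n (symm_of n y) p)) \<in> borel_measurable (lborel_upper n)"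
  unfolding mtrace_def using measurable_mpow_cplx by (intro borel_measurable_sum) auto

lemma etr_minus_diff: "etr n (\<lambda>i j. - A i j - B i j) = exp (- mtrace n A - mtrace n B)"
  unfolding etr_def mtrace_def by (simp add: sum_subtractf sum_negf)

lemma measurable_mtrace_mmul_mpow_real [measurable]:
  "(\<lambda>y. mtrace n (mmul n V (mpow_real n (symm_of n y) a))) \<in> borel_measurable (lborel_upper n)"
  unfolding mtrace_def mmul_def mpow_real_def
  using measurable_mfun[OF calculus_measurable_powr]
  by (intro borel_measurable_sum borel_measurable_times borel_measurable_const) auto

abbreviation etr_weight ::
  "nat \<Rightarrow> (nat \<Rightarrow> nat \<Rightarrow> real) \<Rightarrow> (nat \<Rightarrow> nat \<Rightarrow> real) \<Rightarrow> real \<Rightarrow> (nat \<Rightarrow> nat \<Rightarrow> real) \<Rightarrow> real" where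
  "etr_weight n V W \<alpha> Y \<equiv>
     etr n (\<lambda>i j. - mmul n V (mpow_real n Y \<alpha>) i j - mmul n W (mpow_real n Y (- \<alpha>)) i j)"

lemma measurable_etr_weight [measurable]:
  "(\<lambda>y. etr_weight n V W \<alpha> (symm_of n y)) \<in> borel_measurable (lborel_upper n)"
  unfolding etr_minus_diff by measurable

section \<open>Scalar estimates\<close>

lemma powr_le_exp_bound:
  fixes g d :: real
  assumes "0 \<le> g" "0 < d"
  obtains K where "0 < K" "\<And>u. 0 < u \<Longrightarrow> u powr g \<le> K * exp (d * u)"
proof (cases "g = 0")
  case True
  then show ?thesis using that[of 1] \<open>0 < d\<close> by simp
next
  case False
  then have "0 < g" using assms(1) by simp
  define K where "K = exp (g * ln (g / d))"
  have "u powr g \<le> K * exp (d * u)" if "0 < u" for u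
  proof -
    have "ln u = ln (d * u / g) + ln (g / d)"
      using that \<open>0 < g\<close> \<open>0 < d\<close> by (simp add: ln_div ln_mult)
    also have "\<dots> \<le> (d * u / g - 1) + ln (g / d)"
      using that \<open>0 < g\<close> \<open>0 < d\<close> by (intro add_right_mono ln_le_minus_one) auto
    finally have "g * ln u \<le> d * u + g * ln (g / d)"
      using \<open>0 < g\<close> by (simp add: field_simps)
    then show ?thesis using that unfolding K_def by (simp add: powr_def exp_add[symmetric] mult.commute)
  qed
  then show ?thesis using that[of K] by (simp add: K_def)
qed

text \<open>A power of \<open>t\<close> is absorbed by half of the decay at \<open>\<infinity>\<close> if \<open>b \<ge> 0\<close>, and by the decay at \<open>0\<close>
  if \<open>b < 0\<close>.\<close>
lemma powr_mult_exp_two_sided_bound: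
  fixes b c1 c2 \<alpha> :: real
  assumes c1: "0 < c1" and c2: "0 < c2" and \<alpha>: "0 < \<alpha>"
  obtains K where "0 < K"
    "\<And>t. 0 < t \<Longrightarrow> t powr b * exp (- c1 * t powr \<alpha> - c2 * t powr (- \<alpha>)) \<le> K * exp (- (c1 / 2) * t powr \<alpha>)"
proof (cases "0 \<le> b")
  case True
  obtain K where "0 < K" and K: "\<And>u. 0 < u \<Longrightarrow> u powr (b / \<alpha>) \<le> K * exp ((c1 / 2) * u)"
    using powr_le_exp_bound[of "b / \<alpha>" "c1 / 2"] True \<alpha> c1 by auto
  have "t powr b * exp (- c1 * t powr \<alpha> - c2 * t powr (- \<alpha>)) \<le> K * exp (- (c1 / 2) * t powr \<alpha>)"
    if "0 < t" for t
  proof -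
    have "t powr b * exp (- c1 * t powr \<alpha> - c2 * t powr (- \<alpha>)) \<le> t powr b * exp (- c1 * t powr \<alpha>)"
      using c2 by (intro mult_left_mono) auto
    also have "\<dots> \<le> K * exp ((c1 / 2) * t powr \<alpha>) * exp (- c1 * t powr \<alpha>)"
      using K[of "t powr \<alpha>"] that \<alpha> by (intro mult_right_mono) (auto simp: powr_powr)
    also have "\<dots> = K * exp (- (c1 / 2) * t powr \<alpha>)" by (simp add: mult.assoc exp_add[symmetric])
    finally show ?thesis .
  qed
  with \<open>0 < K\<close> show ?thesis by (rule that)
next
  case False
  obtain K where "0 < K" and K: "\<And>u. 0 < u \<Longrightarrow> u powr (- b / \<alpha>) \<le> K * exp (c2 * u)"
    using powr_le_exp_bound[of "- b / \<alpha>" c2] False \<alpha> c2 by (auto simp: divide_nonpos_pos)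
  have "t powr b * exp (- c1 * t powr \<alpha> - c2 * t powr (- \<alpha>)) \<le> K * exp (- (c1 / 2) * t powr \<alpha>)"
    if "0 < t" for t
  proof -
    define u where "u = t powr (- \<alpha>)"
    have "0 < u" using that by (simp add: u_def)
    have "t powr b * exp (- c1 * t powr \<alpha> - c2 * t powr (- \<alpha>))
        = (u powr (- b / \<alpha>) * exp (- c2 * u)) * exp (- c1 * t powr \<alpha>)"
      using \<alpha> that by (simp add: u_def powr_powr mult_exp_exp algebra_simps)
    also have "\<dots> \<le> (K * exp (c2 * u) * exp (- c2 * u)) * exp (- c1 * t powr \<alpha>)"
      using K[OF \<open>0 < u\<close>] by (intro mult_right_mono) auto
    also have "\<dots> = K * exp (- c1 * t powr \<alpha>)" by (simp add: mult_exp_exp)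
    also have "\<dots> \<le> K * exp (- (c1 / 2) * t powr \<alpha>)" using \<open>0 < K\<close> c1 that by simp
    finally show ?thesis .
  qed
  with \<open>0 < K\<close> show ?thesis by (rule that)
qed

lemma eigenvalue_factor_bound:
  fixes a b c1 c2 \<alpha> :: real
  assumes "0 < c1" "0 < c2" "0 < \<alpha>"
  obtains K where "0 < K" "\<And>t. 0 < t \<Longrightarrow>
    t powr a * (1 + t powr b + t powr (- b)) * exp (- c1 * t powr \<alpha> - c2 * t powr (- \<alpha>))
      \<le> K * exp (- (c1 / 2) * t powr \<alpha>)"
proof -
  let ?E = "\<lambda>t. exp (- c1 * t powr \<alpha> - c2 * t powr (- \<alpha>))"
  obtain K1 where "0 < K1" and K1: "\<And>t. 0 < t \<Longrightarrow> t powr a * ?E t \<le> K1 * exp (- (c1 / 2) * t powr \<alpha>)"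
    using powr_mult_exp_two_sided_bound[OF assms] by blast
  obtain K2 where "0 < K2" and K2: "\<And>t. 0 < t \<Longrightarrow> t powr (a + b) * ?E t \<le> K2 * exp (- (c1 / 2) * t powr \<alpha>)"
    using powr_mult_exp_two_sided_bound[OF assms] by blast
  obtain K3 where "0 < K3" and K3: "\<And>t. 0 < t \<Longrightarrow> t powr (a + - b) * ?E t \<le> K3 * exp (- (c1 / 2) * t powr \<alpha>)"
    using powr_mult_exp_two_sided_bound[OF assms] by blast
  have "t powr a * (1 + t powr b + t powr (- b)) * ?E t
      \<le> (K1 + K2 + K3) * exp (- (c1 / 2) * t powr \<alpha>)" if "0 < t" for t
  proof -
    have "t powr a * (1 + t powr b + t powr (- b)) * ?E t
        = t powr a * ?E t + t powr (a + b) * ?E t + t powr (a + - b) * ?E t"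
      by (simp only: powr_add distrib_left distrib_right mult_1_right)
    then show ?thesis using K1[OF that] K2[OF that] K3[OF that] by (simp add: distrib_right)
  qed
  moreover have "0 < K1 + K2 + K3" using \<open>0 < K1\<close> \<open>0 < K2\<close> \<open>0 < K3\<close> by simp
  ultimately show ?thesis using that by blast
qed

lemma integrable_exp_neg_abs_powr:
  fixes c \<alpha> :: real
  assumes "0 < c" "0 < \<alpha>"
  shows "integrable lborel (\<lambda>x::real. exp (- c * \<bar>x\<bar> powr \<alpha>))"
proof -
  obtain K where "0 < K" and K: "\<And>u. 0 < u \<Longrightarrow> u powr (2 / \<alpha>) \<le> K * exp (c * u)"
    using powr_le_exp_bound[of "2 / \<alpha>" c] assms by auto
  have bound: "exp (- c * \<bar>x\<bar> powr \<alpha>) \<le> (1 + K) * inverse (1 + x\<^sup>2)" for x :: real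
  proof (cases "x = 0")
    case False
    define s where "s = \<bar>x\<bar> powr \<alpha>"
    have "0 < s" using False by (simp add: s_def)
    have "x\<^sup>2 = s powr (2 / \<alpha>)" using \<open>0 < \<alpha>\<close> False by (simp add: s_def powr_powr)
    then have "(1 + x\<^sup>2) * exp (- c * s) \<le> (1 + K * exp (c * s)) * exp (- c * s)"
      using K[OF \<open>0 < s\<close>] by (intro mult_right_mono) auto
    also have "\<dots> = exp (- c * s) + K" by (simp add: distrib_right mult_exp_exp)
    also have "\<dots> \<le> 1 + K" using \<open>0 < c\<close> \<open>0 < s\<close> by simp
    finally have "exp (- c * s) \<le> (1 + K) / (1 + x\<^sup>2)"
      using pos_le_divide_eq[of "1 + x\<^sup>2"] by (simp add: add_pos_nonneg mult.commute)
    then show ?thesis by (simp add: s_def divide_inverse)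
  qed (use \<open>0 < K\<close> in simp)
  have "integrable lborel (\<lambda>x::real. (1 + K) * inverse (1 + x\<^sup>2))"
    using integrable_inverse_1_plus_square by (simp add: set_integrable_def einterval_def)
  then show ?thesis
  proof (rule Bochner_Integration.integrable_bound)
    show "(\<lambda>x::real. exp (- c * \<bar>x\<bar> powr \<alpha>)) \<in> borel_measurable lborel" by measurable
    show "AE x in lborel. norm (exp (- c * \<bar>x\<bar> powr \<alpha>)) \<le> norm ((1 + K) * inverse (1 + x\<^sup>2))"
      using bound \<open>0 < K\<close> by (intro AE_I2) (simp add: add_pos_nonneg)
  qed
qed

section \<open>Domination of the integrands\<close>

lemma mtrace_mmul_mpow_real:
  "mtrace n (mmul n V (mpow_real n Y a))
     = (\<Sum>k<n. eigvals n Y k powr a * bilin n V (\<lambda>i. eigvecs n Y i k) (\<lambda>i. eigvecs n Y i k))"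
proof -
  define Q where "Q = eigvecs n Y"
  define f where "f k = eigvals n Y k powr a" for k
  have "mtrace n (mmul n V (mpow_real n Y a)) = (\<Sum>i<n. \<Sum>m<n. \<Sum>k<n. f k * (Q i k * V i m * Q m k))"
    unfolding mtrace_def mmul_def mpow_real_def mfun_eq_eig Q_def f_def
    by (simp add: sum_distrib_left mult_ac)
  also have "\<dots> = (\<Sum>i<n. \<Sum>k<n. \<Sum>m<n. f k * (Q i k * V i m * Q m k))"
    by (rule sum.cong[OF refl], rule sum.swap)
  also have "\<dots> = (\<Sum>k<n. \<Sum>i<n. \<Sum>m<n. f k * (Q i k * V i m * Q m k))"
    by (rule sum.swap)
  also have "\<dots> = (\<Sum>k<n. f k * bilin n V (\<lambda>i. Q i k) (\<lambda>i. Q i k))"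
    unfolding bilin_def by (simp add: sum_distrib_left)
  finally show ?thesis unfolding Q_def f_def .
qed

lemma mtrace_mmul_mpow_real_ge:
  assumes "msym n Y" and coercive: "\<And>x. v * vdot n x x \<le> bilin n V x x"
  shows "v * (\<Sum>k<n. eigvals n Y k powr a) \<le> mtrace n (mmul n V (mpow_real n Y a))"
proof -
  have "vdot n (\<lambda>i. eigvecs n Y i k) (\<lambda>i. eigvecs n Y i k) = 1" if "k < n" for k
    using spec_decomp_cols[OF spec_decomp_eig[OF assms(1)] that that] by (simp add: vdot_def)
  then have "v * (\<Sum>k<n. eigvals n Y k powr a)
      = (\<Sum>k<n. eigvals n Y k powr a * (v * vdot n (\<lambda>i. eigvecs n Y i k) (\<lambda>i. eigvecs n Y i k)))"
    by (simp add: sum_distrib_left mult_ac)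
  also have "\<dots> \<le> (\<Sum>k<n. eigvals n Y k powr a * bilin n V (\<lambda>i. eigvecs n Y i k) (\<lambda>i. eigvecs n Y i k))"
    using coercive by (intro sum_mono mult_left_mono) auto
  finally show ?thesis unfolding mtrace_mmul_mpow_real .
qed

lemma etr_weight_le_prod_eigvals:
  assumes "msym n Y" and "\<And>x. v * vdot n x x \<le> bilin n V x x" and "\<And>x. w * vdot n x x \<le> bilin n W x x"
  shows "etr_weight n V W \<alpha> Y
    \<le> (\<Prod>k<n. exp (- v * eigvals n Y k powr \<alpha> - w * eigvals n Y k powr (- \<alpha>)))"
proof -
  have "etr_weight n V W \<alpha> Y
      \<le> exp (- (v * (\<Sum>k<n. eigvals n Y k powr \<alpha>)) - w * (\<Sum>k<n. eigvals n Y k powr (- \<alpha>)))"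
    unfolding etr_minus_diff exp_le_cancel_iff
    using mtrace_mmul_mpow_real_ge[OF assms(1,2), of \<alpha>] mtrace_mmul_mpow_real_ge[OF assms(1,3), of "- \<alpha>"]
    by linarith
  also have "\<dots> = (\<Prod>k<n. exp (- v * eigvals n Y k powr \<alpha> - w * eigvals n Y k powr (- \<alpha>)))"
    by (simp add: exp_sum[symmetric] sum_distrib_left sum_subtractf sum_negf)
  finally show ?thesis .
qed

lemma abs_entry_le_max_eigval:
  assumes "y \<in> Pset n" "(i, j) \<in> upper n"
  obtains k where "k < n" "\<bar>y (i, j)\<bar> \<le> eigvals n (symm_of n y) k"
proof -
  define Q where "Q = eigvecs n (symm_of n y)"
  define l where "l = eigvals n (symm_of n y)"
  have sd: "spec_decomp n (symm_of n y) Q l"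
    unfolding Q_def l_def by (rule spec_decomp_eig[OF msym_symm_of])
  have l_pos: "\<And>k. k < n \<Longrightarrow> 0 < l k" using assms(1) unfolding Pset_iff_eigvals_pos l_def by blast
  have "i \<le> j" "j < n" using assms(2) unfolding upper_def by auto
  then have "i < n" by simp
  have "symm_of n y i j = (\<Sum>k<n. Q i k * l k * Q j k)"
    using sd \<open>i < n\<close> \<open>j < n\<close> unfolding spec_decomp_def by blast
  then have "y (i, j) = (\<Sum>k<n. Q i k * l k * Q j k)"
    using \<open>i \<le> j\<close> by (simp add: symm_of_def)
  have "Max (l ` {..<n}) \<in> l ` {..<n}" using \<open>j < n\<close> by (intro Max_in) auto
  then obtain k0 where "k0 < n" "Max (l ` {..<n}) = l k0" by auto
  then have max: "l k \<le> l k0" if "k < n" for k using that by (metis Max_ge finite_imageI finite_lessThan image_eqI lessThan_iff)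
  have amgm: "\<bar>Q i k\<bar> * \<bar>Q j k\<bar> \<le> ((Q i k)\<^sup>2 + (Q j k)\<^sup>2) / 2" for k
  proof -
    have "2 * (\<bar>Q i k\<bar> * \<bar>Q j k\<bar>) \<le> (Q i k)\<^sup>2 + (Q j k)\<^sup>2"
      using sum_squares_bound[of "\<bar>Q i k\<bar>" "\<bar>Q j k\<bar>"] by (simp add: mult.assoc)
    then show ?thesis by (simp add: field_simps)
  qed
  have "\<bar>y (i, j)\<bar> \<le> (\<Sum>k<n. \<bar>Q i k\<bar> * l k * \<bar>Q j k\<bar>)"
    unfolding \<open>y (i, j) = _\<close> using l_pos
    by (intro order.trans[OF sum_abs] sum_mono) (auto simp: abs_mult less_imp_le)
  also have "\<dots> \<le> (\<Sum>k<n. l k0 * (\<bar>Q i k\<bar> * \<bar>Q j k\<bar>))"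
    using max by (intro sum_mono) (auto simp: mult_ac intro: mult_right_mono)
  also have "\<dots> \<le> l k0 * (\<Sum>k<n. ((Q i k)\<^sup>2 + (Q j k)\<^sup>2) / 2)"
    unfolding sum_distrib_left[symmetric] using l_pos[OF \<open>k0 < n\<close>] amgm
    by (intro mult_left_mono sum_mono) auto
  also have "(\<Sum>k<n. ((Q i k)\<^sup>2 + (Q j k)\<^sup>2) / 2) = 1"
    using spec_decomp_rows[OF sd \<open>i < n\<close> \<open>i < n\<close>] spec_decomp_rows[OF sd \<open>j < n\<close> \<open>j < n\<close>]
    by (simp add: sum.distrib sum_divide_distrib[symmetric] power2_eq_square)
  finally show ?thesis using that \<open>k0 < n\<close> unfolding l_def by simp
qed

lemma sum_abs_entries_powr_le:
  assumes "y \<in> Pset n" "0 < \<alpha>"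
  shows "(\<Sum>ij\<in>upper n. \<bar>y ij\<bar> powr \<alpha>) \<le> real (card (upper n)) * (\<Sum>k<n. eigvals n (symm_of n y) k powr \<alpha>)"
proof -
  have "\<bar>y ij\<bar> powr \<alpha> \<le> (\<Sum>k<n. eigvals n (symm_of n y) k powr \<alpha>)" if "ij \<in> upper n" for ij
  proof -
    obtain i j where ij: "ij = (i, j)" by fastforce
    with \<open>ij \<in> upper n\<close> obtain k where "k < n" "\<bar>y (i, j)\<bar> \<le> eigvals n (symm_of n y) k"
      using abs_entry_le_max_eigval[OF assms(1)] by blast
    then have "\<bar>y (i, j)\<bar> powr \<alpha> \<le> eigvals n (symm_of n y) k powr \<alpha>"
      using \<open>0 < \<alpha>\<close> by (intro powr_mono2) auto
    also have "\<dots> \<le> (\<Sum>k<n. eigvals n (symm_of n y) k powr \<alpha>)"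
      using \<open>k < n\<close> by (intro member_le_sum) auto
    finally show ?thesis using ij by simp
  qed
  then have "(\<Sum>ij\<in>upper n. \<bar>y ij\<bar> powr \<alpha>) \<le> (\<Sum>ij\<in>upper n. \<Sum>k<n. eigvals n (symm_of n y) k powr \<alpha>)"
    by (rule sum_mono)
  then show ?thesis by simp
qed

lemma finite_upper: "finite (upper n)"
  by (rule finite_subset[of _ "{..<n} \<times> {..<n}"]) (auto simp: upper_def)

lemma exp_sum_eigvals_le_prod_entries:
  assumes "y \<in> Pset n" "0 < v" "0 < \<alpha>"
  defines "c \<equiv> v / (2 * (real (card (upper n)) + 1))"
  shows "exp (- (v / 2) * (\<Sum>k<n. eigvals n (symm_of n y) k powr \<alpha>))
    \<le> (\<Prod>ij\<in>upper n. exp (- c * \<bar>y ij\<bar> powr \<alpha>))"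
proof -
  let ?N = "real (card (upper n))" and ?S = "\<Sum>k<n. eigvals n (symm_of n y) k powr \<alpha>"
  have "0 \<le> ?S" by (intro sum_nonneg) simp
  have "c * (\<Sum>ij\<in>upper n. \<bar>y ij\<bar> powr \<alpha>) \<le> c * (?N * ?S)"
    using sum_abs_entries_powr_le[OF assms(1,3)] assms(2) by (intro mult_left_mono) (auto simp: c_def)
  also have "\<dots> = (v / 2) * (?N / (?N + 1)) * ?S" by (simp add: c_def field_simps)
  also have "\<dots> \<le> (v / 2) * 1 * ?S"
    using \<open>0 \<le> ?S\<close> assms(2) by (intro mult_right_mono mult_left_mono) auto
  finally have "c * (\<Sum>ij\<in>upper n. \<bar>y ij\<bar> powr \<alpha>) \<le> (v / 2) * ?S" by simp
  then show ?thesis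
    by (simp add: exp_sum[OF finite_upper, symmetric] sum_negf sum_distrib_left[symmetric])
qed

lemma sum_le_prod_one_plus:
  fixes x :: "nat \<Rightarrow> real"
  assumes "\<And>k. 0 \<le> x k"
  shows "(\<Sum>k<n. x k) \<le> (\<Prod>k<n. 1 + x k)"
proof (induction n)
  case (Suc n)
  have "1 \<le> (\<Prod>k<n. 1 + x k)" using assms by (intro prod_ge_1) auto
  then have "(\<Sum>k<n. x k) + x n \<le> (\<Prod>k<n. 1 + x k) + (\<Prod>k<n. 1 + x k) * x n"
    using Suc.IH assms[of n] by (intro add_mono) (auto simp: mult_le_cancel_right1)
  then show ?case by (simp add: algebra_simps)
qed simp

lemma weighted_integrand_le_prod_eigvals:
  fixes X :: complex
  assumes Y: "posdef n Y"
    and V: "\<And>x. v * vdot n x x \<le> bilin n V x x" and W: "\<And>x. w * vdot n x x \<le> bilin n W x x"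
    and X: "norm X \<le> (\<Sum>k<n. eigvals n Y k powr b + eigvals n Y k powr (- b))"
  shows "mdet n Y powr (- (real n + 1) / 2)
      * norm (complex_of_real (mdet n Y) powr \<nu> * X * complex_of_real (etr_weight n V W \<alpha> Y))
    \<le> (\<Prod>k<n. eigvals n Y k powr (Re \<nu> - (real n + 1) / 2) * (1 + eigvals n Y k powr b + eigvals n Y k powr (- b))
          * exp (- v * eigvals n Y k powr \<alpha> - w * eigvals n Y k powr (- \<alpha>)))"
proof -
  let ?l = "eigvals n Y" and ?a = "Re \<nu> - (real n + 1) / 2"
  have sym: "msym n Y" using Y by (rule posdef_msym)
  have l_pos: "\<And>k. k < n \<Longrightarrow> 0 < ?l k" using Y posdef_iff_eigvals_pos[OF sym] by blast
  have D: "mdet n Y = (\<Prod>k<n. ?l k)" by (rule mdet_eq_prod_eigvals[OF sym])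
  have "0 < mdet n Y" unfolding D using l_pos by (intro prod_pos) auto
  have E_pos: "0 < etr_weight n V W \<alpha> Y" by (simp add: etr_def)
  have "norm X \<le> (\<Prod>k<n. 1 + (?l k powr b + ?l k powr (- b)))"
    using X by (rule order.trans[OF _ sum_le_prod_one_plus]) simp
  then have X': "norm X \<le> (\<Prod>k<n. 1 + ?l k powr b + ?l k powr (- b))" by (simp add: add.assoc)
  have "mdet n Y powr (- (real n + 1) / 2) * mdet n Y powr Re \<nu> = mdet n Y powr ?a"
    by (simp add: powr_add[symmetric] field_simps)
  then have "mdet n Y powr (- (real n + 1) / 2)
        * norm (complex_of_real (mdet n Y) powr \<nu> * X * complex_of_real (etr_weight n V W \<alpha> Y))
      = mdet n Y powr ?a * norm X * etr_weight n V W \<alpha> Y"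
    using \<open>0 < mdet n Y\<close> E_pos by (simp add: norm_mult norm_powr_real_powr mult.assoc[symmetric])
  also have "\<dots> \<le> (\<Prod>k<n. ?l k powr ?a) * (\<Prod>k<n. 1 + ?l k powr b + ?l k powr (- b))
      * (\<Prod>k<n. exp (- v * ?l k powr \<alpha> - w * ?l k powr (- \<alpha>)))"
    unfolding D prod_powr_distrib using X' etr_weight_le_prod_eigvals[OF sym V W] E_pos l_pos
    by (intro mult_mono) (auto intro!: prod_nonneg mult_nonneg_nonneg simp: less_imp_le)
  finally show ?thesis by (simp add: prod.distrib)
qed

lemma weighted_integrand_dominated:
  fixes X :: "(nat \<times> nat \<Rightarrow> real) \<Rightarrow> complex"
  assumes "posdef n V" "posdef n W" "0 < \<alpha>"
    and X_le: "\<And>y. y \<in> Pset n \<Longrightarrow>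
      norm (X y) \<le> (\<Sum>k<n. eigvals n (symm_of n y) k powr b + eigvals n (symm_of n y) k powr (- b))"
  obtains K c where "0 < c" "0 \<le> K" "\<And>y. y \<in> Pset n \<Longrightarrow>
      mdet n (symm_of n y) powr (- (real n + 1) / 2)
        * norm (complex_of_real (mdet n (symm_of n y)) powr \<nu> * X y
                * complex_of_real (etr_weight n V W \<alpha> (symm_of n y)))
      \<le> K * (\<Prod>ij\<in>upper n. exp (- c * \<bar>y ij\<bar> powr \<alpha>))"
proof -
  obtain v where "0 < v" and V: "\<And>x. v * vdot n x x \<le> bilin n V x x"
    using posdef_coercive[OF assms(1)] by blast
  obtain w where "0 < w" and W: "\<And>x. w * vdot n x x \<le> bilin n W x x"
    using posdef_coercive[OF assms(2)] by blast
  obtain K where "0 < K" and K: "\<And>t. 0 < t \<Longrightarrow>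
      t powr (Re \<nu> - (real n + 1) / 2) * (1 + t powr b + t powr (- b)) * exp (- v * t powr \<alpha> - w * t powr (- \<alpha>))
        \<le> K * exp (- (v / 2) * t powr \<alpha>)"
    using eigenvalue_factor_bound[OF \<open>0 < v\<close> \<open>0 < w\<close> assms(3)] by blast
  define c where "c = v / (2 * (real (card (upper n)) + 1))"
  have "0 < c" using \<open>0 < v\<close> by (simp add: c_def add_pos_nonneg)
  moreover have "mdet n (symm_of n y) powr (- (real n + 1) / 2)
        * norm (complex_of_real (mdet n (symm_of n y)) powr \<nu> * X y
                * complex_of_real (etr_weight n V W \<alpha> (symm_of n y)))
      \<le> K ^ n * (\<Prod>ij\<in>upper n. exp (- c * \<bar>y ij\<bar> powr \<alpha>))"
    if y: "y \<in> Pset n" for y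
  proof -
    let ?l = "eigvals n (symm_of n y)"
    have "posdef n (symm_of n y)" using y by (simp add: Pset_def)
    have l_pos: "\<And>k. k < n \<Longrightarrow> 0 < ?l k" using y by (simp add: Pset_iff_eigvals_pos)
    note weighted_integrand_le_prod_eigvals[OF \<open>posdef n (symm_of n y)\<close> V W X_le[OF y]]
    also have "(\<Prod>k<n. ?l k powr (Re \<nu> - (real n + 1) / 2) * (1 + ?l k powr b + ?l k powr (- b))
          * exp (- v * ?l k powr \<alpha> - w * ?l k powr (- \<alpha>)))
        \<le> (\<Prod>k<n. K * exp (- (v / 2) * ?l k powr \<alpha>))"
      using K l_pos by (intro prod_mono) (auto intro!: mult_nonneg_nonneg)
    also have "\<dots> = K ^ n * exp (- (v / 2) * (\<Sum>k<n. ?l k powr \<alpha>))"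
      by (simp add: prod.distrib exp_sum sum_distrib_left)
    also have "\<dots> \<le> K ^ n * (\<Prod>ij\<in>upper n. exp (- c * \<bar>y ij\<bar> powr \<alpha>))"
      using exp_sum_eigvals_le_prod_entries[OF y \<open>0 < v\<close> assms(3)] \<open>0 < K\<close>
      by (intro mult_left_mono) (simp_all add: c_def)
    finally show ?thesis .
  qed
  ultimately show ?thesis using that[of c "K ^ n"] \<open>0 < K\<close> by simp
qed

lemma integrable_density_dominated:
  fixes g :: "'a \<Rightarrow> 'b::{banach, second_countable_topology}"
  assumes [measurable]: "f \<in> borel_measurable M" "g \<in> borel_measurable M"
    and "\<And>x. 0 \<le> f x" "integrable M B" "\<And>x. f x * norm (g x) \<le> B x"
  shows "integrable (density M (\<lambda>x. ennreal (f x))) g"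
proof -
  have "integrable M (\<lambda>x. f x *\<^sub>R g x)"
    by (rule Bochner_Integration.integrable_bound[OF assms(4)])
       (use assms(3,5) in \<open>auto intro!: AE_I2 order.trans[OF _ abs_ge_self]\<close>)
  then show ?thesis using assms(3) by (subst integrable_density) auto
qed

lemma mu_eq_density: "mu n = density (lborel_upper n)
    (\<lambda>y. ennreal (indicator (Pset n) y * mdet n (symm_of n y) powr (- (real n + 1) / 2)))"
  unfolding mu_def by (intro arg_cong[where f = "density _"] ext) (simp split: split_indicator)

lemma integrable_product_exp_neg_abs_powr:
  assumes "0 < c" "0 < \<alpha>"
  shows "integrable (lborel_upper n) (\<lambda>y. \<Prod>ij\<in>upper n. exp (- c * \<bar>y ij\<bar> powr \<alpha>))"
proof -
  interpret product_sigma_finite "\<lambda>_::nat \<times> nat. lborel" by unfold_locales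
  show ?thesis
    by (rule product_integrable_prod[OF finite_upper]) (rule integrable_exp_neg_abs_powr[OF assms])
qed

lemma integrable_mu_etr_weight:
  fixes X :: "(nat \<times> nat \<Rightarrow> real) \<Rightarrow> complex"
  assumes "posdef n V" "posdef n W" "0 < \<alpha>" and [measurable]: "X \<in> borel_measurable (lborel_upper n)"
    and X_le: "\<And>y. y \<in> Pset n \<Longrightarrow>
      norm (X y) \<le> (\<Sum>k<n. eigvals n (symm_of n y) k powr b + eigvals n (symm_of n y) k powr (- b))"
  shows "integrable (mu n) (\<lambda>y. complex_of_real (mdet n (symm_of n y)) powr \<nu> * X y
                                * complex_of_real (etr_weight n V W \<alpha> (symm_of n y)))"
proof -
  obtain K c where "0 < c" "0 \<le> K" and dominated: "\<And>y. y \<in> Pset n \<Longrightarrow>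
      mdet n (symm_of n y) powr (- (real n + 1) / 2)
        * norm (complex_of_real (mdet n (symm_of n y)) powr \<nu> * X y
                * complex_of_real (etr_weight n V W \<alpha> (symm_of n y)))
      \<le> K * (\<Prod>ij\<in>upper n. exp (- c * \<bar>y ij\<bar> powr \<alpha>))"
    using weighted_integrand_dominated[OF assms(1-3) X_le, where \<nu> = \<nu>] by blast
  show ?thesis
    unfolding mu_eq_density
  proof (rule integrable_density_dominated)
    show "integrable (lborel_upper n) (\<lambda>y. K * (\<Prod>ij\<in>upper n. exp (- c * \<bar>y ij\<bar> powr \<alpha>)))"
      using integrable_product_exp_neg_abs_powr[OF \<open>0 < c\<close> \<open>0 < \<alpha>\<close>] by simp
    fix y
    show "indicator (Pset n) y * mdet n (symm_of n y) powr (- (real n + 1) / 2)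
        * norm (complex_of_real (mdet n (symm_of n y)) powr \<nu> * X y
                * complex_of_real (etr_weight n V W \<alpha> (symm_of n y)))
      \<le> K * (\<Prod>ij\<in>upper n. exp (- c * \<bar>y ij\<bar> powr \<alpha>))"
      using dominated \<open>0 \<le> K\<close> by (cases "y \<in> Pset n") (auto intro!: mult_nonneg_nonneg prod_nonneg)
  next
    show "(\<lambda>y. indicator (Pset n) y * mdet n (symm_of n y) powr (- (real n + 1) / 2))
        \<in> borel_measurable (lborel_upper n)"
      by measurable
    show "(\<lambda>y. complex_of_real (mdet n (symm_of n y)) powr \<nu> * X y
          * complex_of_real (etr_weight n V W \<alpha> (symm_of n y))) \<in> borel_measurable (lborel_upper n)"
      by measurable
  qed simp
qed

lemma norm_mtrace_mpow_cplx_le: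
  assumes "y \<in> Pset n"
  shows "norm (mtrace n (mpow_cplx n (symm_of n y) p))
    \<le> (\<Sum>k<n. eigvals n (symm_of n y) k powr Re p + eigvals n (symm_of n y) k powr (- Re p))"
proof -
  have l_pos: "\<And>k. k < n \<Longrightarrow> 0 < eigvals n (symm_of n y) k" using assms by (simp add: Pset_iff_eigvals_pos)
  have "norm (mtrace n (mpow_cplx n (symm_of n y) p))
      \<le> (\<Sum>k<n. norm (complex_of_real (eigvals n (symm_of n y) k) powr p))"
    unfolding mpow_cplx_def mtrace_mfun[OF msym_symm_of] by (rule norm_sum)
  also have "\<dots> = (\<Sum>k<n. eigvals n (symm_of n y) k powr Re p)"
    using l_pos by (intro sum.cong refl) (simp add: norm_powr_real_powr less_imp_le)
  also have "\<dots> \<le> (\<Sum>k<n. eigvals n (symm_of n y) k powr Re p + eigvals n (symm_of n y) k powr (- Re p))"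
    by (intro sum_mono) simp
  finally show ?thesis .
qed

lemma abs_ln_le_powr:
  fixes t :: real
  assumes "0 < t"
  shows "\<bar>ln t\<bar> \<le> t powr 1 + t powr (- 1)"
proof -
  have "0 < inverse t" using assms by simp
  have "ln t \<le> t - 1" using ln_le_minus_one[OF assms] .
  moreover have "- ln t \<le> inverse t - 1"
    using ln_le_minus_one[OF \<open>0 < inverse t\<close>] assms by (simp add: ln_inverse)
  moreover have "t powr 1 + t powr (- 1) = t + inverse t" using assms by (simp add: powr_minus)
  ultimately show ?thesis using \<open>0 < inverse t\<close> assms unfolding abs_le_iff by linarith
qed

lemma norm_ln_mdet_le:
  assumes "y \<in> Pset n"
  shows "norm (complex_of_real (ln (mdet n (symm_of n y))))
    \<le> (\<Sum>k<n. eigvals n (symm_of n y) k powr 1 + eigvals n (symm_of n y) k powr (- 1))"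
proof -
  have l_pos: "\<And>k. k < n \<Longrightarrow> 0 < eigvals n (symm_of n y) k" using assms by (simp add: Pset_iff_eigvals_pos)
  then have "ln (mdet n (symm_of n y)) = (\<Sum>k<n. ln (eigvals n (symm_of n y) k))"
    unfolding mdet_eq_prod_eigvals[OF msym_symm_of] by (subst ln_prod) (auto simp: less_imp_neq[symmetric])
  then have "norm (complex_of_real (ln (mdet n (symm_of n y)))) \<le> (\<Sum>k<n. \<bar>ln (eigvals n (symm_of n y) k)\<bar>)"
    by (simp only: norm_of_real sum_abs)
  also have "\<dots> \<le> (\<Sum>k<n. eigvals n (symm_of n y) k powr 1 + eigvals n (symm_of n y) k powr (- 1))"
    using l_pos by (intro sum_mono abs_ln_le_powr) auto
  finally show ?thesis .
qed

theorem lemmaC4: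
  fixes n :: nat and V W :: "nat \<Rightarrow> nat \<Rightarrow> real" and \<nu> p :: complex and \<alpha> :: real
  assumes "posdef n V" and "posdef n W" and "\<alpha> > 0"
  shows "integrable (mu n) (\<lambda>y.
           complex_of_real (mdet n (symm_of n y)) powr \<nu>
           * mtrace n (mpow_cplx n (symm_of n y) p)
           * complex_of_real (etr n (\<lambda>i j. - mmul n V (mpow_real n (symm_of n y) \<alpha>) i j
                                            - mmul n W (mpow_real n (symm_of n y) (- \<alpha>)) i j)))
       \<and> integrable (mu n) (\<lambda>y.
           complex_of_real (mdet n (symm_of n y)) powr \<nu>
           * complex_of_real (ln (mdet n (symm_of n y)))
           * complex_of_real (etr n (\<lambda>i j. - mmul n V (mpow_real n (symm_of n y) \<alpha>) i j
                                            - mmul n W (mpow_real n (symm_of n y) (- \<alpha>)) i j)))"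
proof
  show "integrable (mu n) (\<lambda>y.
           complex_of_real (mdet n (symm_of n y)) powr \<nu>
           * mtrace n (mpow_cplx n (symm_of n y) p)
           * complex_of_real (etr_weight n V W \<alpha> (symm_of n y)))"
    by (rule integrable_mu_etr_weight[OF assms measurable_mtrace_mpow_cplx norm_mtrace_mpow_cplx_le])
  show "integrable (mu n) (\<lambda>y.
           complex_of_real (mdet n (symm_of n y)) powr \<nu>
           * complex_of_real (ln (mdet n (symm_of n y)))
           * complex_of_real (etr_weight n V W \<alpha> (symm_of n y)))"
    by (rule integrable_mu_etr_weight[OF assms _ norm_ln_mdet_le]) measurable
qed

end
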